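(* Let $S$ be the Phillips symmetric operator with deficiency indices $\langle2,2\rangle$ in $\mathfrak{H}$, let $J$ be a fundamental symmetry in $\mathfrak{H}$ commuting with $S$, and let $B$ be a $J$-self-adjoint extension of $S$. Then $B$ is similar to a self-adjoint operator in $\mathfrak{H}$ if and only if the spectrum of $B$ is real.
   Context: Phillips symmetric operator: let $U$ be a unitary operator in a Hilbert space $\mathfrak{H}$ which is a bilateral shift with a wandering subspace $W_0$ (the subspaces $U^nW_0$, $n\in\mathbb{Z}$, are mutually orthogonal with orthogonal sum $\mathfrak{H}$); $V=U\upharpoonright(\mathfrak{H}\ominus W_0)$, $S=i(V+I)(V-I)^{-1}$, $\mathcal{D}(S)=\mathcal{R}(V-I)$; its deficiency indices are $\langle\dim W_0,\dim W_0\rangle$, so here $\dim W_0=2$. A fundamental symmetry is a bounded $J$ with $J=J^*$, $J^2=I$; $J$ commutes with $S$ if $J\mathcal{D}(S)\subset\mathcal{D}(S)$ and $JSu=SJu$. A densely defined operator $B$ is $J$-self-adjoint if $B^*J=JB$. $B$ is similar to a self-adjoint operator if there exist a bounded boundedly invertible operator $W$ on $\mathfrak{H}$ and a self-adjoint operator $H$ in $\mathfrak{H}$ with $B=W^{-1}HW$ (in particular $\mathcal{D}(B)=W^{-1}\mathcal{D}(H)$). *)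

theory Defs
  imports "HOL-Analysis.Analysis"
begin

text \<open>A complex Hilbert space is modelled as a real Hilbert space (real inner product,
complete) together with a complex scalar multiplication extending the real one, such that
multiplication by the imaginary unit is isometric. The complex inner product is
recovered from the real one (linear in the first argument).\<close>

class chilbert = real_inner + complete_space +
  fixes scaleC :: "complex \<Rightarrow> 'a \<Rightarrow> 'a"
  assumes scaleC_add_right: "scaleC a (x + y) = scaleC a x + scaleC a y"
    and scaleC_add_left: "scaleC (a + b) x = scaleC a x + scaleC b x"
    and scaleC_scaleC: "scaleC a (scaleC b x) = scaleC (a * b) x"
    and scaleC_one: "scaleC 1 x = x"
    and scaleC_of_real: "scaleC (complex_of_real r) x = scaleR r x"
    and inner_scaleC_ii: "inner (scaleC \<i> x) (scaleC \<i> y) = inner x y"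

definition cinner :: "'a::chilbert \<Rightarrow> 'a \<Rightarrow> complex" where
  "cinner x y = Complex (inner x y) (inner x (scaleC \<i> y))"

definition csubspace :: "'a::chilbert set \<Rightarrow> bool" where
  "csubspace M \<longleftrightarrow> 0 \<in> M \<and> (\<forall>x\<in>M. \<forall>y\<in>M. x + y \<in> M) \<and> (\<forall>c. \<forall>x\<in>M. scaleC c x \<in> M)"

definition ortho_compl :: "'a::chilbert set \<Rightarrow> 'a set" where
  "ortho_compl W = {x. \<forall>w\<in>W. cinner x w = 0}"

definition has_cdim :: "'a::chilbert set \<Rightarrow> nat \<Rightarrow> bool" where
  "has_cdim W n \<longleftrightarrow> (\<exists>e::nat \<Rightarrow> 'a.
      W = {(\<Sum>i<n. scaleC (c i) (e i)) | c. True} \<and>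
      (\<forall>c. (\<Sum>i<n. scaleC (c i) (e i)) = 0 \<longrightarrow> (\<forall>i<n. c i = 0)))"

definition bounded_clinear :: "('a::chilbert \<Rightarrow> 'a) \<Rightarrow> bool" where
  "bounded_clinear f \<longleftrightarrow> bounded_linear f \<and> (\<forall>c x. f (scaleC c x) = scaleC c (f x))"

definition cunitary :: "('a::chilbert \<Rightarrow> 'a) \<Rightarrow> bool" where
  "cunitary U \<longleftrightarrow> bounded_clinear U \<and> bij U \<and> (\<forall>x y. cinner (U x) (U y) = cinner x y)"

definition upow :: "('a \<Rightarrow> 'a) \<Rightarrow> int \<Rightarrow> 'a \<Rightarrow> 'a" where
  "upow U n = (if 0 \<le> n then U ^^ nat n else inv U ^^ nat (- n))"

definition bilateral_shift :: "('a::chilbert \<Rightarrow> 'a) \<Rightarrow> 'a set \<Rightarrow> bool" where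
  "bilateral_shift U W0 \<longleftrightarrow> cunitary U \<and> csubspace W0 \<and> closed W0 \<and>
     (\<forall>m n::int. m \<noteq> n \<longrightarrow> (\<forall>x\<in>W0. \<forall>y\<in>W0. cinner (upow U m x) (upow U n y) = 0)) \<and>
     closure (span (\<Union>n::int. upow U n ` W0)) = UNIV"

definition fundamental_symmetry :: "('a::chilbert \<Rightarrow> 'a) \<Rightarrow> bool" where
  "fundamental_symmetry J \<longleftrightarrow> bounded_clinear J \<and> (\<forall>x. J (J x) = x) \<and>
     (\<forall>x y. cinner (J x) y = cinner x (J y))"

type_synonym 'a lop = "('a \<times> 'a) set"

definition is_op :: "'a::chilbert lop \<Rightarrow> bool" where
  "is_op T \<longleftrightarrow> (0, 0) \<in> T \<and> (\<forall>p\<in>T. \<forall>q\<in>T. p + q \<in> T) \<and>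
     (\<forall>c x y. (x, y) \<in> T \<longrightarrow> (scaleC c x, scaleC c y) \<in> T) \<and>
     (\<forall>y. (0, y) \<in> T \<longrightarrow> y = 0)"

definition dense_op :: "'a::chilbert lop \<Rightarrow> bool" where
  "dense_op T \<longleftrightarrow> is_op T \<and> closure (Domain T) = UNIV"

definition op_adj :: "'a::chilbert lop \<Rightarrow> 'a lop" where
  "op_adj T = {(y, z). \<forall>(x, w)\<in>T. cinner w y = cinner x z}"

definition self_adjoint_op :: "'a::chilbert lop \<Rightarrow> bool" where
  "self_adjoint_op H \<longleftrightarrow> dense_op H \<and> op_adj H = H"

definition op_comp_right :: "'a lop \<Rightarrow> ('a \<Rightarrow> 'a) \<Rightarrow> 'a lop" where
  "op_comp_right T J = {(x, z). (J x, z) \<in> T}"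

definition op_comp_left :: "('a \<Rightarrow> 'a) \<Rightarrow> 'a lop \<Rightarrow> 'a lop" where
  "op_comp_left J T = {(x, J w) | x w. (x, w) \<in> T}"

definition J_self_adjoint :: "('a::chilbert \<Rightarrow> 'a) \<Rightarrow> 'a lop \<Rightarrow> bool" where
  "J_self_adjoint J B \<longleftrightarrow> dense_op B \<and> op_comp_right (op_adj B) J = op_comp_left J B"

definition commutes_with :: "('a \<Rightarrow> 'a) \<Rightarrow> 'a lop \<Rightarrow> bool" where
  "commutes_with J S \<longleftrightarrow> (\<forall>u w. (u, w) \<in> S \<longrightarrow> (J u, J w) \<in> S)"

text \<open>The Phillips symmetric operator S = i(V+I)(V-I)^{-1}, D(S) = R(V-I),
V = U restricted to H minus W0, written as its graph.\<close>
definition phillips_op :: "('a::chilbert \<Rightarrow> 'a) \<Rightarrow> 'a set \<Rightarrow> 'a lop" where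
  "phillips_op U W0 = {(U x - x, scaleC \<i> (U x + x)) | x. x \<in> ortho_compl W0}"

text \<open>Resolvent set and spectrum (lambda is regular iff B - lambda I maps D(B) bijectively
onto the space with bounded inverse).\<close>
definition op_resolvent_set :: "'a::chilbert lop \<Rightarrow> complex set" where
  "op_resolvent_set B = {l. \<exists>R. bounded_clinear R \<and>
      (\<forall>y. (R y, y + scaleC l (R y)) \<in> B) \<and>
      (\<forall>x w. (x, w) \<in> B \<longrightarrow> R (w - scaleC l x) = x)}"

definition op_spectrum :: "'a::chilbert lop \<Rightarrow> complex set" where
  "op_spectrum B = - op_resolvent_set B"

definition similar_to_self_adjoint :: "'a::chilbert lop \<Rightarrow> bool" where
  "similar_to_self_adjoint B \<longleftrightarrow> (\<exists>W H. bounded_clinear W \<and> bij W \<and> bounded_clinear (inv W) \<and>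
      self_adjoint_op H \<and> B = {(x, y). (W x, W y) \<in> H})"

end

theory Submission
  imports Defs
begin

text \<open>If the spectrum of \<open>B\<close> is real, then \<open>\<plusminus>i\<close> are regular points and the Cayley transform
\<open>T = (B + i)(B - i)\<^sup>-\<^sup>1\<close> is bounded with bounded inverse, and \<open>B\<close> is recovered from \<open>T\<close> as
\<open>i(T + I)(T - I)\<^sup>-\<^sup>1\<close>. Since \<open>S \<subseteq> B\<close>, \<open>T\<close> agrees with \<open>U\<close> on \<open>W\<^sub>0\<^sup>\<bottom>\<close>; since \<open>J\<close> commutes with
\<open>S\<close> and \<open>B\<close> is \<open>J\<close>-self-adjoint, also \<open>B \<subseteq> S\<^sup>*\<close>, which forces \<open>T W\<^sub>0 \<subseteq> U W\<^sub>0\<close>. Hence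
\<open>T = U(I + D)\<close> with \<open>D\<close> vanishing on \<open>W\<^sub>0\<^sup>\<bottom>\<close> and taking values in \<open>W\<^sub>0\<close>. The operator
\<open>Z = I + \<Sum>\<^sub>n\<^sub>\<ge>\<^sub>0 U\<^sup>-\<^sup>n D U\<^sup>n\<close> converges strongly, because its summands have mutually orthogonal ranges
\<open>U\<^sup>-\<^sup>n W\<^sub>0\<close> and are controlled by Bessel's inequality for the wandering subspace; it satisfies
\<open>Z T = U Z\<close>, and the same construction for \<open>T\<^sup>-\<^sup>1\<close> yields its inverse. Therefore \<open>B = Z\<^sup>-\<^sup>1 H Z\<close>,
where \<open>H = i(U + I)(U - I)\<^sup>-\<^sup>1\<close> is self-adjoint. Conversely, every non-real number is a regular
point of a self-adjoint operator, and similarity preserves regular points.\<close>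

instance chilbert \<subseteq> banach ..

lemma scaleC_zero_right [simp]: "scaleC c (0::'a::chilbert) = 0"
  by (metis add_cancel_right_left scaleC_add_right)

lemma scaleC_zero_left [simp]: "scaleC 0 (x::'a::chilbert) = 0"
  by (metis add_cancel_right_left add_0 scaleC_add_left)

lemma scaleC_minus_right: "scaleC c (- x::'a::chilbert) = - scaleC c x"
  by (metis add.inverse_unique add.right_inverse scaleC_add_right scaleC_zero_right)

lemma scaleC_diff_right: "scaleC c (x - y::'a::chilbert) = scaleC c x - scaleC c y"
  by (metis diff_conv_add_uminus scaleC_add_right scaleC_minus_right)

lemma scaleC_minus_left: "scaleC (- c) (x::'a::chilbert) = - scaleC c x"
  by (metis add.inverse_unique add.right_inverse scaleC_add_left scaleC_zero_left)

lemma scaleC_double: "scaleC (2 * c) x = scaleC c x + scaleC c (x::'a::chilbert)"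
  using scaleC_add_left[of c c x] by (simp only: mult_2)

lemma scaleC_i_scaleC_i [simp]: "scaleC \<i> (scaleC \<i> x) = - (x::'a::chilbert)"
  by (metis scaleC_scaleC scaleC_minus_left scaleC_one complex_i_mult_minus)

lemma scaleC_scaleR: "scaleC c (scaleR r x) = scaleR r (scaleC c (x::'a::chilbert))"
  by (metis scaleC_of_real scaleC_scaleC mult.commute)

lemma scaleC_Complex: "scaleC (Complex a b) (x::'a::chilbert) = scaleR a x + scaleR b (scaleC \<i> x)"
proof -
  have "Complex a b = of_real a + of_real b * \<i>" by (simp add: complex_eq_iff)
  then show ?thesis by (simp add: scaleC_add_left scaleC_of_real flip: scaleC_scaleC)
qed

lemma inner_scaleC_i_left: "inner (scaleC \<i> x) y = - inner x (scaleC \<i> (y::'a::chilbert))"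
  by (metis inner_scaleC_ii scaleC_i_scaleC_i inner_minus_left)

lemma inner_scaleC_i_self [simp]: "inner x (scaleC \<i> (x::'a::chilbert)) = 0"
  by (metis inner_scaleC_i_left inner_commute add.inverse_unique add_eq_0_iff2 neg_equal_zero)

lemma inner_scaleC_i_self_left [simp]: "inner (scaleC \<i> (x::'a::chilbert)) x = 0"
  by (metis inner_scaleC_i_self inner_commute)

lemma norm_scaleC [simp]: "norm (scaleC c (x::'a::chilbert)) = cmod c * norm x"
proof -
  obtain a b where c: "c = Complex a b" by (metis complex.exhaust)
  have "(norm (scaleC c x))\<^sup>2 = (a\<^sup>2 + b\<^sup>2) * (norm x)\<^sup>2"
    unfolding c scaleC_Complex power2_norm_eq_inner
    by (simp add: inner_add_left inner_add_right inner_commute[of x "scaleC \<i> x"] algebra_simps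
        power2_eq_square inner_scaleC_ii)
  then have "norm (scaleC c x) = sqrt (a\<^sup>2 + b\<^sup>2) * norm x"
    by (metis norm_ge_zero real_sqrt_abs real_sqrt_mult abs_of_nonneg real_sqrt_mult_self
        power2_eq_square)
  then show ?thesis by (simp add: c cmod_def)
qed

lemma bounded_linear_scaleC: "bounded_linear (scaleC c :: 'a::chilbert \<Rightarrow> 'a)"
  by (rule bounded_linear_intro[where K="cmod c"]) (auto simp: scaleC_add_right scaleC_scaleR)

lemma cinner_add_left: "cinner (x + y) z = cinner x z + cinner y (z::'a::chilbert)"
  by (simp add: cinner_def inner_add_left complex_eq_iff)

lemma cinner_add_right: "cinner z (x + y) = cinner z x + cinner z (y::'a::chilbert)"
  by (simp add: cinner_def inner_add_right scaleC_add_right complex_eq_iff)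

lemma cinner_scaleC_left: "cinner (scaleC c x) y = c * cinner x (y::'a::chilbert)"
proof -
  obtain a b where c: "c = Complex a b" by (metis complex.exhaust)
  show ?thesis unfolding c cinner_def scaleC_Complex
    by (simp add: inner_add_left inner_scaleC_i_left complex_eq_iff algebra_simps)
qed

lemma cinner_commute: "cinner y x = cnj (cinner x (y::'a::chilbert))"
  by (simp add: cinner_def complex_eq_iff inner_commute) (metis inner_commute inner_scaleC_i_left)

lemma cinner_scaleC_right: "cinner x (scaleC c y) = cnj c * cinner x (y::'a::chilbert)"
  by (metis cinner_commute cinner_scaleC_left complex_cnj_mult)

lemma cinner_zero_left [simp]: "cinner 0 (x::'a::chilbert) = 0"
  by (simp add: cinner_def complex_eq_iff)

lemma cinner_zero_right [simp]: "cinner x (0::'a::chilbert) = 0"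
  by (simp add: cinner_def complex_eq_iff)

lemma cinner_minus_left: "cinner (- x) y = - cinner x (y::'a::chilbert)"
  by (metis add.right_inverse add_eq_0_iff cinner_add_left cinner_zero_left)

lemma cinner_minus_right: "cinner y (- x) = - cinner y (x::'a::chilbert)"
  by (metis add.right_inverse add_eq_0_iff cinner_add_right cinner_zero_right)

lemma cinner_diff_left: "cinner (x - y) z = cinner x z - cinner y (z::'a::chilbert)"
  by (metis diff_conv_add_uminus cinner_add_left cinner_minus_left)

lemma cinner_diff_right: "cinner z (x - y) = cinner z x - cinner z (y::'a::chilbert)"
  by (metis diff_conv_add_uminus cinner_add_right cinner_minus_right)

lemma cinner_self: "cinner x x = of_real ((norm (x::'a::chilbert))\<^sup>2)"
  by (simp add: cinner_def complex_eq_iff power2_norm_eq_inner)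

lemma cinner_self_eq_0 [simp]: "cinner x x = 0 \<longleftrightarrow> (x::'a::chilbert) = 0"
  by (simp add: cinner_self)

lemma Re_cinner: "Re (cinner x y) = inner x (y::'a::chilbert)"
  by (simp add: cinner_def)

lemma cinner_scaleR_left: "cinner (scaleR r x) y = of_real r * cinner x (y::'a::chilbert)"
  by (metis cinner_scaleC_left scaleC_of_real)

lemma cinner_scaleR_right: "cinner x (scaleR r y) = of_real r * cinner x (y::'a::chilbert)"
  by (metis cinner_scaleC_right scaleC_of_real complex_cnj_complex_of_real)

lemma orthogonal_if_cinner_eq_0: "cinner a b = 0 \<Longrightarrow> orthogonal a (b::'a::chilbert)"
  unfolding orthogonal_def by (metis Re_cinner zero_complex.sel(1))

lemma cinner_Cauchy_Schwarz: "cmod (cinner x y) \<le> norm x * norm (y::'a::chilbert)"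
proof (cases "cinner x y = 0")
  case False
  let ?c = "cinner x y"
  have "cinner (scaleC (cnj ?c) x) y = of_real ((cmod ?c)\<^sup>2)"
    unfolding cinner_scaleC_left by (subst mult.commute) (rule complex_norm_square[symmetric])
  then have "(cmod ?c)\<^sup>2 = inner (scaleC (cnj ?c) x) y"
    by (metis Re_cinner Re_complex_of_real)
  also have "\<dots> \<le> norm (scaleC (cnj ?c) x) * norm y" by (rule norm_cauchy_schwarz)
  also have "\<dots> = cmod ?c * (norm x * norm y)" by simp
  finally have "cmod ?c * cmod ?c \<le> cmod ?c * (norm x * norm y)" by (simp add: power2_eq_square)
  then show ?thesis using False by simp
qed simp

lemma bounded_linear_cinner_right: "bounded_linear (\<lambda>y. cinner x (y::'a::chilbert))"
  by (rule bounded_linear_intro[where K="norm x"])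
    (auto simp: cinner_add_right cinner_scaleR_right scaleR_conv_of_real,
      metis cinner_Cauchy_Schwarz mult.commute)

lemma bounded_linear_cinner_left: "bounded_linear (\<lambda>y. cinner (y::'a::chilbert) x)"
  by (rule bounded_linear_intro[where K="norm x"])
    (auto simp: cinner_add_left cinner_scaleR_left scaleR_conv_of_real,
      metis cinner_Cauchy_Schwarz mult.commute)

lemma cinner_sum_left: "cinner (sum f A) a = (\<Sum>i\<in>A. cinner (f i::'a::chilbert) a)"
  by (rule linear_sum[OF bounded_linear.linear[OF bounded_linear_cinner_left]])

lemma cinner_sum_right: "cinner a (sum f A) = (\<Sum>i\<in>A. cinner a (f i::'a::chilbert))"
  by (rule linear_sum[OF bounded_linear.linear[OF bounded_linear_cinner_right]])

lemma cinner_eq_left: "(\<And>y. cinner x y = cinner z y) \<Longrightarrow> (x::'a::chilbert) = z"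
  by (metis cinner_diff_left cinner_self_eq_0 eq_iff_diff_eq_0)

lemma cinner_eq_right: "(\<And>y. cinner y x = cinner y z) \<Longrightarrow> (x::'a::chilbert) = z"
  by (metis cinner_commute cinner_eq_left)

section \<open>Orthogonal projection onto closed subspaces\<close>

lemma minimizing_sequence_Cauchy:
  fixes f :: "nat \<Rightarrow> 'a::real_inner"
  assumes mid: "\<And>m n. d \<le> norm (x - scaleR (1/2) (f m + f n))" and "0 \<le> d" "0 \<le> C"
    and close: "\<And>n. (norm (x - f n))\<^sup>2 \<le> d\<^sup>2 + C / Suc n"
  shows "Cauchy f"
proof (rule CauchyI)
  fix e :: real assume e: "0 < e"
  obtain K :: nat where K: "4 * C / e\<^sup>2 < K" using reals_Archimedean2 by blast
  show "\<exists>K. \<forall>m\<ge>K. \<forall>n\<ge>K. norm (f m - f n) < e"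
  proof (intro exI allI impI)
    fix m n assume mK: "K \<le> m" and nK: "K \<le> n"
    \<comment> \<open>parallelogram law\<close>
    have "(norm (f m - f n))\<^sup>2 = 2 * (norm (x - f m))\<^sup>2 + 2 * (norm (x - f n))\<^sup>2
        - 4 * (norm (x - scaleR (1/2) (f m + f n)))\<^sup>2"
      unfolding power2_norm_eq_inner
      by (simp add: inner_diff_left inner_diff_right inner_add_left inner_add_right inner_commute
          algebra_simps)
    also have "\<dots> \<le> 2 * C / Suc m + 2 * C / Suc n"
    proof -
      have "d\<^sup>2 \<le> (norm (x - scaleR (1/2) (f m + f n)))\<^sup>2"
        using mid[of m n] \<open>0 \<le> d\<close> by (intro power_mono) auto
      then show ?thesis using close[of m] close[of n] by simp
    qed
    also have "\<dots> \<le> 2 * C / Suc K + 2 * C / Suc K"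
      using \<open>0 \<le> C\<close> mK nK by (intro add_mono divide_left_mono) auto
    also have "\<dots> = 4 * C / Suc K" by simp
    also have "\<dots> < e\<^sup>2"
    proof -
      have "4 * C < e\<^sup>2 * K" using K e by (simp add: field_simps)
      also have "\<dots> \<le> e\<^sup>2 * Suc K" by (intro mult_left_mono) auto
      finally show ?thesis by (simp add: pos_divide_less_eq)
    qed
    finally show "norm (f m - f n) < e" using e by (simp add: power_less_imp_less_base)
  qed
qed

lemma closest_point_exists:
  fixes M :: "'a::{real_inner,complete_space} set"
  assumes "closed M" and "subspace M"
  shows "\<exists>p\<in>M. \<forall>m\<in>M. norm (x - p) \<le> norm (x - m)"
proof -
  define d where "d = (INF m\<in>M. norm (x - m))"
  have nonempty: "M \<noteq> {}" using \<open>subspace M\<close> by (auto simp: subspace_def)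
  have d_le: "d \<le> norm (x - m)" if "m \<in> M" for m
    unfolding d_def using that by (intro cINF_lower bdd_belowI2[of _ 0]) auto
  have "0 \<le> d" unfolding d_def using nonempty by (intro cINF_greatest) auto
  have "\<exists>m\<in>M. norm (x - m) < d + 1 / Suc n" for n
  proof -
    have "Inf ((\<lambda>m. norm (x - m)) ` M) < d + 1 / Suc n" by (simp add: d_def)
    from cInf_lessD[OF _ this] nonempty show ?thesis by auto
  qed
  then obtain f where fM: "\<And>n. f n \<in> M" and fd: "\<And>n. norm (x - f n) < d + 1 / Suc n"
    by metis
  have "Cauchy f"
  proof (rule minimizing_sequence_Cauchy[where C="2 * d + 1"])
    show "d \<le> norm (x - scaleR (1/2) (f m + f n))" for m n
      using \<open>subspace M\<close> fM by (intro d_le) (simp add: subspace_add subspace_mul)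
    show "(norm (x - f n))\<^sup>2 \<le> d\<^sup>2 + (2 * d + 1) / Suc n" for n
    proof -
      have "(norm (x - f n))\<^sup>2 \<le> (d + 1 / Suc n)\<^sup>2"
        using fd[of n] by (intro power_mono) auto
      also have "\<dots> = d\<^sup>2 + 2 * d * (1 / Suc n) + (1 / Suc n) * (1 / Suc n)"
        by (simp add: power2_eq_square algebra_simps)
      also have "\<dots> \<le> d\<^sup>2 + 2 * d * (1 / Suc n) + 1 * (1 / Suc n)"
        by (intro add_left_mono mult_right_mono) auto
      finally show ?thesis by (simp add: algebra_simps add_divide_distrib)
    qed
  qed (use \<open>0 \<le> d\<close> in auto)
  then obtain p where p: "f \<longlonglongrightarrow> p" using Cauchy_convergent_iff convergentD by blast
  have "norm (x - p) \<le> d"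
  proof (rule LIMSEQ_le)
    show "(\<lambda>n. norm (x - f n)) \<longlonglongrightarrow> norm (x - p)" by (intro tendsto_intros p)
    show "(\<lambda>n. d + 1 / Suc n) \<longlonglongrightarrow> d"
      using tendsto_add[OF tendsto_const LIMSEQ_Suc[OF lim_inverse_n']] by simp
  qed (use fd less_imp_le in auto)
  then show ?thesis using closed_sequentially[OF \<open>closed M\<close> fM p] d_le by force
qed

lemma orthogonal_projection_exists_real:
  fixes M :: "'a::{real_inner,complete_space} set"
  assumes "closed M" and "subspace M"
  shows "\<exists>p\<in>M. \<forall>m\<in>M. inner (x - p) m = 0"
proof -
  obtain p where "p \<in> M" and closest: "\<forall>m\<in>M. norm (x - p) \<le> norm (x - m)"
    using closest_point_exists[OF assms] by blast
  have "inner (x - p) m = 0" if "m \<in> M" for m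
  proof (rule ccontr)
    let ?c = "inner (x - p) m"
    assume "?c \<noteq> 0"
    then have "m \<noteq> 0" by auto
    define t where "t = ?c / inner m m"
    have "p + scaleR t m \<in> M" using \<open>subspace M\<close> \<open>p \<in> M\<close> \<open>m \<in> M\<close>
      by (simp add: subspace_add subspace_mul)
    then have "(norm (x - p))\<^sup>2 \<le> (norm ((x - p) - scaleR t m))\<^sup>2"
      using closest by (simp add: algebra_simps)
    also have "\<dots> = (norm (x - p))\<^sup>2 - 2 * t * ?c + t\<^sup>2 * inner m m"
      unfolding power2_norm_eq_inner
      by (simp add: inner_diff_left inner_diff_right inner_commute algebra_simps power2_eq_square)
    also have "\<dots> = (norm (x - p))\<^sup>2 - ?c\<^sup>2 / inner m m"
      using \<open>m \<noteq> 0\<close> by (simp add: t_def power2_eq_square field_simps)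
    finally have "?c\<^sup>2 / inner m m \<le> 0" by simp
    moreover have "0 < ?c\<^sup>2 / inner m m" using \<open>?c \<noteq> 0\<close> \<open>m \<noteq> 0\<close> by (intro divide_pos_pos) auto
    ultimately show False by simp
  qed
  then show ?thesis using \<open>p \<in> M\<close> by blast
qed

lemma csubspace_subspace: "csubspace M \<Longrightarrow> subspace (M::'a::chilbert set)"
  unfolding csubspace_def subspace_def by (metis scaleC_of_real)

lemma csubspaceD:
  assumes "csubspace M"
  shows "0 \<in> M" "x \<in> M \<Longrightarrow> y \<in> M \<Longrightarrow> x + y \<in> M" "x \<in> M \<Longrightarrow> scaleC c x \<in> M"
    "x \<in> M \<Longrightarrow> y \<in> M \<Longrightarrow> x - y \<in> M"
  using assms unfolding csubspace_def
  by (auto, metis diff_conv_add_uminus scaleC_minus_left scaleC_one)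

lemma ortho_compl_orth_left: "x \<in> ortho_compl M \<Longrightarrow> m \<in> M \<Longrightarrow> cinner x m = 0"
  unfolding ortho_compl_def by blast

lemma ortho_compl_orth_right: "x \<in> ortho_compl M \<Longrightarrow> m \<in> M \<Longrightarrow> cinner m x = 0"
  unfolding ortho_compl_def by (metis (mono_tags) cinner_commute complex_cnj_zero mem_Collect_eq)

lemma csubspace_ortho_compl: "csubspace (ortho_compl (M::'a::chilbert set))"
  unfolding csubspace_def ortho_compl_def by (auto simp: cinner_add_left cinner_scaleC_left)

lemma closed_ortho_compl: "closed (ortho_compl (M::'a::chilbert set))"
proof -
  have "ortho_compl M = (\<Inter>m\<in>M. {y. cinner y m = 0})" unfolding ortho_compl_def by auto
  moreover have "closed {y. cinner y m = 0}" for m :: 'a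
    by (rule closed_Collect_eq) (auto intro: linear_continuous_on bounded_linear_cinner_left)
  ultimately show ?thesis by auto
qed

lemma orthogonal_projection_exists:
  fixes M :: "'a::chilbert set"
  assumes "closed M" and "csubspace M"
  shows "\<exists>p\<in>M. x - p \<in> ortho_compl M"
proof -
  obtain p where "p \<in> M" and orth: "\<forall>m\<in>M. inner (x - p) m = 0"
    using orthogonal_projection_exists_real[OF assms(1) csubspace_subspace[OF assms(2)]] by blast
  have "cinner (x - p) m = 0" if "m \<in> M" for m
    using orth that csubspaceD(3)[OF assms(2), of m \<i>] by (simp add: cinner_def complex_eq_iff)
  then show ?thesis using \<open>p \<in> M\<close> unfolding ortho_compl_def by blast
qed

lemma mem_if_orthogonal_to_ortho_compl:
  fixes M :: "'a::chilbert set"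
  assumes "closed M" and "csubspace M"
    and orth: "\<And>v. v \<in> ortho_compl M \<Longrightarrow> cinner z v = 0"
  shows "z \<in> M"
proof -
  obtain p where "p \<in> M" and res: "z - p \<in> ortho_compl M"
    using orthogonal_projection_exists[OF assms(1,2)] by blast
  have "cinner (z - p) (z - p) = cinner z (z - p) - cinner p (z - p)" by (rule cinner_diff_left)
  also have "\<dots> = 0" using orth[OF res] ortho_compl_orth_right[OF res \<open>p \<in> M\<close>] by simp
  finally show ?thesis using \<open>p \<in> M\<close> by simp
qed

lemma csubspace_closure:
  fixes M :: "'a::chilbert set"
  assumes "csubspace M"
  shows "csubspace (closure M)"
  unfolding csubspace_def
proof (intro conjI ballI allI)
  show "0 \<in> closure M" using csubspaceD(1)[OF assms] closure_subset by blast
next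
  fix x y assume "x \<in> closure M" "y \<in> closure M"
  then obtain f g where f: "\<And>n. f n \<in> M" "f \<longlonglongrightarrow> x" and g: "\<And>n. g n \<in> M" "g \<longlonglongrightarrow> y"
    unfolding closure_sequential by metis
  have "(\<lambda>n. f n + g n) \<longlonglongrightarrow> x + y" by (intro tendsto_add f g)
  moreover have "\<And>n. f n + g n \<in> M" using f g csubspaceD(2)[OF assms] by blast
  ultimately show "x + y \<in> closure M"
    unfolding closure_sequential by (intro exI[of _ "\<lambda>n. f n + g n"]) auto
next
  fix c and x :: 'a assume "x \<in> closure M"
  then have "scaleC c x \<in> scaleC c ` closure M" by blast
  also have "\<dots> \<subseteq> closure (scaleC c ` M)"
    by (rule closure_bounded_linear_image_subset[OF bounded_linear_scaleC])
  also have "\<dots> \<subseteq> closure M" using csubspaceD(3)[OF assms] by (intro closure_mono) blast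
  finally show "scaleC c x \<in> closure M" .
qed

lemma dense_if_ortho_compl_trivial:
  fixes M :: "'a::chilbert set"
  assumes "csubspace M" and orth: "\<And>y. (\<And>m. m \<in> M \<Longrightarrow> cinner m y = 0) \<Longrightarrow> y = 0"
  shows "closure M = UNIV"
proof -
  have "y \<in> closure M" for y
  proof -
    obtain p where "p \<in> closure M" and res: "y - p \<in> ortho_compl (closure M)"
      using orthogonal_projection_exists[OF closed_closure csubspace_closure[OF assms(1)]] by blast
    have "y - p = 0"
      by (rule orth) (meson closure_subset ortho_compl_orth_right res subsetD)
    then show ?thesis using \<open>p \<in> closure M\<close> by simp
  qed
  then show ?thesis by blast
qed

lemma bounded_clinear_bounded_linear: "bounded_clinear f \<Longrightarrow> bounded_linear f"
  unfolding bounded_clinear_def by blast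

lemma clinear_scaleC: "bounded_clinear f \<Longrightarrow> f (scaleC c x) = scaleC c (f x)"
  unfolding bounded_clinear_def by blast

lemma clinear_add: "bounded_clinear f \<Longrightarrow> f (x + y) = f x + f y"
  using bounded_clinear_bounded_linear linear_add bounded_linear.linear by blast

lemma clinear_diff: "bounded_clinear f \<Longrightarrow> f (x - y) = f x - f y"
  using bounded_clinear_bounded_linear linear_diff bounded_linear.linear by blast

lemma clinear_zero: "bounded_clinear f \<Longrightarrow> f 0 = 0"
  using bounded_clinear_bounded_linear linear_0 bounded_linear.linear by blast

lemma bounded_clinear_pos_bounded: "bounded_clinear f \<Longrightarrow> \<exists>K>0. \<forall>x. norm (f x) \<le> norm x * K"
  using bounded_clinear_bounded_linear bounded_linear.pos_bounded by blast

lemma bounded_clinear_compose: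
  "bounded_clinear f \<Longrightarrow> bounded_clinear g \<Longrightarrow> bounded_clinear (\<lambda>x. f (g x))"
  unfolding bounded_clinear_def by (simp add: bounded_linear_compose[of f g])

lemma bounded_clinear_ident: "bounded_clinear (\<lambda>x::'a::chilbert. x)"
  unfolding bounded_clinear_def by (simp add: bounded_linear_ident)

lemma bounded_clinear_scaleC: "bounded_clinear (scaleC c :: 'a::chilbert \<Rightarrow> 'a)"
  unfolding bounded_clinear_def by (simp add: bounded_linear_scaleC scaleC_scaleC mult.commute)

lemma bounded_clinear_add:
  "bounded_clinear f \<Longrightarrow> bounded_clinear g \<Longrightarrow> bounded_clinear (\<lambda>x. f x + g x)"
  unfolding bounded_clinear_def by (simp add: bounded_linear_add scaleC_add_right)

lemma bounded_clinear_diff: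
  "bounded_clinear f \<Longrightarrow> bounded_clinear g \<Longrightarrow> bounded_clinear (\<lambda>x. f x - g x)"
  unfolding bounded_clinear_def by (simp add: bounded_linear_sub scaleC_diff_right)

lemma bounded_clinear_intro:
  fixes f :: "'a::chilbert \<Rightarrow> 'a"
  assumes "\<And>x y. f (x + y) = f x + f y" and "\<And>c x. f (scaleC c x) = scaleC c (f x)"
    and "\<And>x. norm (f x) \<le> norm x * K"
  shows "bounded_clinear f"
  unfolding bounded_clinear_def
  by (auto intro!: bounded_linear_intro[where K=K] simp: assms simp flip: scaleC_of_real)

lemma bounded_clinear_inv:
  fixes f :: "'a::chilbert \<Rightarrow> 'a"
  assumes f: "bounded_clinear f" and "bij f" and bound: "\<And>x. norm x \<le> norm (f x) * K"
  shows "bounded_clinear (inv f)"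
proof (rule bounded_clinear_intro[where K=K])
  have f_inv: "f (inv f y) = y" and inv_f: "inv f (f y) = y" for y
    using \<open>bij f\<close> by (simp_all add: bij_is_surj surj_f_inv_f bij_is_inj)
  show "inv f (x + y) = inv f x + inv f y" for x y by (metis clinear_add[OF f] f_inv inv_f)
  show "inv f (scaleC c x) = scaleC c (inv f x)" for c x by (metis clinear_scaleC[OF f] f_inv inv_f)
  show "norm (inv f x) \<le> norm x * K" for x using bound[of "inv f x"] f_inv by simp
qed

lemma inv_bij_eq:
  assumes "\<And>x. g (f x) = x" and "\<And>y. f (g y) = y"
  shows "bij f" and "inv f = g"
proof -
  show "bij f" by (rule o_bij[of g]) (simp_all add: assms fun_eq_iff)
  show "inv f = g" by (rule inv_equality[OF assms])
qed

locale unitary =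
  fixes U :: "'a::chilbert \<Rightarrow> 'a"
  assumes cunitary: "cunitary U"
begin

lemma bounded_clinear_U: "bounded_clinear U" and bij_U: "bij U"
  and cinner_U: "cinner (U x) (U y) = cinner x y"
  using cunitary unfolding cunitary_def by auto

lemma norm_U [simp]: "norm (U x) = norm x"
proof -
  have "(norm (U x))\<^sup>2 = (norm x)\<^sup>2" using cinner_U[of x x] by (metis cinner_self of_real_eq_iff)
  then show ?thesis by (simp add: power2_eq_iff_nonneg)
qed

lemma U_inv_U [simp]: "U (inv U x) = x"
  using bij_U by (simp add: bij_is_surj surj_f_inv_f)

lemma inv_U_U [simp]: "inv U (U x) = x"
  using bij_U by (simp add: bij_is_inj)

lemma bounded_clinear_inv_U: "bounded_clinear (inv U)"
  by (rule bounded_clinear_inv[OF bounded_clinear_U bij_U, where K=1]) simp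

lemma cinner_inv_U_left: "cinner (inv U x) y = cinner x (U y)"
  by (metis U_inv_U cinner_U)

lemma cinner_inv_U_right: "cinner x (inv U y) = cinner (U x) y"
  by (metis U_inv_U cinner_U)

lemma upow_Suc: "upow U (a + 1) x = U (upow U a x)"
proof (cases "0 \<le> a")
  case True
  then have "nat (a + 1) = Suc (nat a)" by simp
  then show ?thesis using True by (simp add: upow_def)
next
  case False
  then have "nat (- a) = Suc (nat (- (a + 1)))" by simp
  then show ?thesis using False by (simp add: upow_def)
qed

lemma upow_pred: "upow U (a - 1) x = inv U (upow U a x)"
  using upow_Suc[of "a - 1" x] by simp

lemma upow_0 [simp]: "upow U 0 x = x"
  by (simp add: upow_def)

lemma upow_1 [simp]: "upow U 1 x = U x"
  using upow_Suc[of 0 x] by simp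

lemma upow_add: "upow U a (upow U b x) = upow U (a + b) x"
proof (induction a rule: int_induct[where k=0])
  case (step1 i) then show ?case using upow_Suc by (metis add.commute add.left_commute)
next
  case (step2 i) then show ?case using upow_pred by (metis add.commute add_diff_eq)
qed simp

lemma upow_minus_cancel [simp]: "upow U (- n) (upow U n x) = x" "upow U n (upow U (- n) x) = x"
  by (simp_all add: upow_add)

lemma cunitary_upow: "cunitary (upow U n)"
proof (induction n rule: int_induct[where k=0])
  case base
  have "upow U 0 = (\<lambda>x. x)" by (rule ext) simp
  then show ?case by (simp add: cunitary_def bounded_clinear_ident bij_id[unfolded id_def])
next
  case (step1 i)
  have "upow U (i + 1) = (\<lambda>x. U (upow U i x))" by (rule ext) (rule upow_Suc)
  with step1 show ?case unfolding cunitary_def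
    by (auto intro: bounded_clinear_compose[OF bounded_clinear_U] bij_comp[unfolded comp_def]
        simp: cinner_U bij_U)
next
  case (step2 i)
  have "upow U (i - 1) = (\<lambda>x. inv U (upow U i x))" by (rule ext) (rule upow_pred)
  with step2 show ?case unfolding cunitary_def
    using bounded_clinear_inv_U bij_imp_bij_inv[OF bij_U] cinner_inv_U_left
    by (auto intro: bounded_clinear_compose bij_comp[unfolded comp_def] simp: cinner_inv_U_left)
qed

lemma unitary_upow: "unitary (upow U n)"
  by unfold_locales (rule cunitary_upow)

lemma norm_upow [simp]: "norm (upow U n x) = norm x"
  using unitary.norm_U[OF unitary_upow] .

lemma cinner_upow: "cinner (upow U n x) (upow U n y) = cinner x y"
  using unitary.cinner_U[OF unitary_upow] .

lemma bounded_clinear_upow: "bounded_clinear (upow U n)"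
  using unitary.bounded_clinear_U[OF unitary_upow] .

lemma upow_fixed_point: "U x = x \<Longrightarrow> upow U n x = x"
proof (induction n rule: int_induct[where k=0])
  case (step1 i) then show ?case by (simp add: upow_Suc)
next
  case (step2 i) then show ?case by (simp add: upow_pred) (metis inv_U_U)
qed simp

end

lemma is_op_zero: "is_op T \<Longrightarrow> (0, 0) \<in> T"
  unfolding is_op_def by blast

lemma is_op_add: "is_op T \<Longrightarrow> (a, b) \<in> T \<Longrightarrow> (c, d) \<in> T \<Longrightarrow> (a + c, b + d) \<in> T"
  unfolding is_op_def by (metis add_Pair)

lemma is_op_scaleC: "is_op T \<Longrightarrow> (a, b) \<in> T \<Longrightarrow> (scaleC c a, scaleC c b) \<in> T"
  unfolding is_op_def by blast

lemma is_op_diff: "is_op T \<Longrightarrow> (a, b) \<in> T \<Longrightarrow> (c, d) \<in> T \<Longrightarrow> (a - c, b - d) \<in> T"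
  using is_op_add[of T a b "- c" "- d"] is_op_scaleC[of T c d "- 1"]
  by (simp add: scaleC_minus_left scaleC_one)

lemma op_adj_closed_sequentially:
  assumes "\<And>n. (x n, w n) \<in> op_adj T" and "x \<longlonglongrightarrow> a" and "w \<longlonglongrightarrow> b"
  shows "(a, b) \<in> op_adj (T::'a::chilbert lop)"
  unfolding op_adj_def
proof clarsimp
  fix u v assume "(u, v) \<in> T"
  then have eq: "cinner v (x n) = cinner u (w n)" for n using assms(1)[of n] unfolding op_adj_def by auto
  have "(\<lambda>n. cinner v (x n)) \<longlonglongrightarrow> cinner v a"
    by (rule bounded_linear.tendsto[OF bounded_linear_cinner_right assms(2)])
  moreover have "(\<lambda>n. cinner v (x n)) \<longlonglongrightarrow> cinner u b"
    unfolding eq by (rule bounded_linear.tendsto[OF bounded_linear_cinner_right assms(3)])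
  ultimately show "cinner v a = cinner u b" by (rule LIMSEQ_unique)
qed

lemma csubspace_op_shift_range:
  assumes "is_op H"
  shows "csubspace {w - scaleC l x | x w. (x, w) \<in> H}"
  unfolding csubspace_def
proof (intro conjI allI ballI)
  show "0 \<in> {w - scaleC l x | x w. (x, w) \<in> H}"
    using is_op_zero[OF assms] by (intro CollectI exI[of _ 0]) simp
next
  fix a b assume "a \<in> {w - scaleC l x | x w. (x, w) \<in> H}" "b \<in> {w - scaleC l x | x w. (x, w) \<in> H}"
  then obtain x w x' w' where "(x, w) \<in> H" "(x', w') \<in> H" "a = w - scaleC l x" "b = w' - scaleC l x'"
    by blast
  then show "a + b \<in> {w - scaleC l x | x w. (x, w) \<in> H}"
    by (intro CollectI exI[of _ "x + x'"] exI[of _ "w + w'"])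
      (auto simp: is_op_add[OF assms] scaleC_add_right)
next
  fix c a assume "a \<in> {w - scaleC l x | x w. (x, w) \<in> H}"
  then obtain x w where "(x, w) \<in> H" "a = w - scaleC l x" by blast
  then show "scaleC c a \<in> {w - scaleC l x | x w. (x, w) \<in> H}"
    by (intro CollectI exI[of _ "scaleC c x"] exI[of _ "scaleC c w"])
      (auto simp: is_op_scaleC[OF assms] scaleC_diff_right scaleC_scaleC mult.commute)
qed

lemma op_resolvent_set_intro:
  fixes H :: "'a::chilbert lop"
  assumes "is_op H" and "0 < c"
    and bound: "\<And>x w. (x, w) \<in> H \<Longrightarrow> c * norm x \<le> norm (w - scaleC l x)"
    and onto: "\<And>y. \<exists>x w. (x, w) \<in> H \<and> y = w - scaleC l x"
  shows "l \<in> op_resolvent_set H"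
proof -
  define R where "R y = (SOME x. (x, y + scaleC l x) \<in> H)" for y
  have R_graph: "(R y, y + scaleC l (R y)) \<in> H" for y
  proof -
    obtain x w where "(x, w) \<in> H" "y = w - scaleC l x" using onto by blast
    then have "(x, y + scaleC l x) \<in> H" by simp
    then show ?thesis unfolding R_def by (rule someI)
  qed
  have R_left_inverse: "R (w - scaleC l x) = x" if "(x, w) \<in> H" for x w
  proof -
    let ?y = "w - scaleC l x"
    have "c * norm (R ?y - x) \<le> norm ((?y + scaleC l (R ?y) - w) - scaleC l (R ?y - x))"
      by (rule bound) (rule is_op_diff[OF \<open>is_op H\<close> R_graph that])
    also have "\<dots> = 0" by (simp add: scaleC_diff_right)
    finally show ?thesis using \<open>0 < c\<close> by (simp add: mult_le_0_iff)
  qed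
  have "bounded_clinear R"
  proof (rule bounded_clinear_intro[where K="1 / c"])
    fix a b
    have "(R a + R b, (a + scaleC l (R a)) + (b + scaleC l (R b))) \<in> H"
      by (rule is_op_add[OF \<open>is_op H\<close> R_graph R_graph])
    from R_left_inverse[OF this] show "R (a + b) = R a + R b"
      by (simp add: scaleC_add_right algebra_simps)
  next
    fix k a
    have "(scaleC k (R a), scaleC k (a + scaleC l (R a))) \<in> H"
      by (rule is_op_scaleC[OF \<open>is_op H\<close> R_graph])
    from R_left_inverse[OF this] show "R (scaleC k a) = scaleC k (R a)"
      by (simp add: scaleC_add_right scaleC_scaleC mult.commute)
  next
    fix a
    have "c * norm (R a) \<le> norm ((a + scaleC l (R a)) - scaleC l (R a))" by (rule bound[OF R_graph])
    then show "norm (R a) \<le> norm a * (1 / c)" using \<open>0 < c\<close> by (simp add: field_simps)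
  qed
  then show ?thesis unfolding op_resolvent_set_def using R_graph R_left_inverse by blast
qed

lemma op_resolvent_set_similar:
  fixes H :: "'a::chilbert lop"
  assumes W: "bounded_clinear W" "bij W" "bounded_clinear (inv W)"
    and "l \<in> op_resolvent_set H"
  shows "l \<in> op_resolvent_set {(x, y). (W x, W y) \<in> H}"
proof -
  obtain R where R: "bounded_clinear R" "\<And>y. (R y, y + scaleC l (R y)) \<in> H"
    "\<And>x w. (x, w) \<in> H \<Longrightarrow> R (w - scaleC l x) = x"
    using assms(4) unfolding op_resolvent_set_def by blast
  have W_inv_W: "W (inv W x) = x" and inv_W_W: "inv W (W x) = x" for x
    using W(2) by (simp_all add: bij_is_surj surj_f_inv_f bij_is_inj)
  define R' where "R' y = inv W (R (W y))" for y
  have "bounded_clinear R'"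
    unfolding R'_def by (rule bounded_clinear_compose[OF W(3) bounded_clinear_compose[OF R(1) W(1)]])
  moreover have "(R' y, y + scaleC l (R' y)) \<in> {(x, y). (W x, W y) \<in> H}" for y
    using R(2)[of "W y"] by (simp add: R'_def W_inv_W clinear_add[OF W(1)] clinear_scaleC[OF W(1)])
  moreover have "R' (w - scaleC l x) = x" if "(x, w) \<in> {(x, y). (W x, W y) \<in> H}" for x w
    using R(3)[of "W x" "W w"] that
    by (simp add: R'_def inv_W_W clinear_diff[OF W(1)] clinear_scaleC[OF W(1)])
  ultimately show ?thesis unfolding op_resolvent_set_def by blast
qed

section \<open>Self-adjoint operators have real spectrum\<close>

lemma self_adjoint_opD: "self_adjoint_op H \<Longrightarrow> is_op H" "self_adjoint_op H \<Longrightarrow> op_adj H = H"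
  unfolding self_adjoint_op_def dense_op_def by auto

lemma self_adjoint_op_shift_bound:
  fixes H :: "'a::chilbert lop"
  assumes "self_adjoint_op H" and "(x, w) \<in> H"
  shows "\<bar>Im k\<bar> * norm x \<le> norm (w - scaleC k x)"
proof -
  have "(x, w) \<in> op_adj H" using assms self_adjoint_opD(2)[OF assms(1)] by simp
  then have "cinner w x = cinner x w" using assms(2) unfolding op_adj_def by auto
  then have "Im (cinner w x) = 0" by (metis cinner_commute Reals_cnj_iff complex_is_Real_iff)
  then have "Im (cinner (w - scaleC k x) x) = - Im k * (norm x)\<^sup>2"
    by (simp add: cinner_diff_left cinner_scaleC_left cinner_self)
  then have "\<bar>Im k\<bar> * (norm x)\<^sup>2 = \<bar>Im (cinner (w - scaleC k x) x)\<bar>" by (simp add: abs_mult)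
  also have "\<dots> \<le> cmod (cinner (w - scaleC k x) x)" by (rule abs_Im_le_cmod)
  also have "\<dots> \<le> norm (w - scaleC k x) * norm x" by (rule cinner_Cauchy_Schwarz)
  finally have "(\<bar>Im k\<bar> * norm x) * norm x \<le> norm (w - scaleC k x) * norm x"
    by (simp add: power2_eq_square mult.assoc)
  then show ?thesis by (cases "norm x = 0") (auto simp: mult_le_cancel_right)
qed

lemma closed_self_adjoint_op_shift_range:
  fixes H :: "'a::chilbert lop"
  assumes sa: "self_adjoint_op H" and "Im l \<noteq> 0"
  shows "closed {w - scaleC l x | x w. (x, w) \<in> H}"
  unfolding closed_sequential_limits
proof (intro allI impI)
  fix y and y0 assume "(\<forall>n. y n \<in> {w - scaleC l x | x w. (x, w) \<in> H}) \<and> y \<longlonglongrightarrow> y0"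
  then have y: "\<forall>n. \<exists>p. p \<in> H \<and> y n = snd p - scaleC l (fst p)" and "y \<longlonglongrightarrow> y0" by force+
  obtain P where P: "\<And>n. P n \<in> H \<and> y n = snd (P n) - scaleC l (fst (P n))"
    using choice[OF y] by blast
  define x where "x n = fst (P n)" for n
  define w where "w n = snd (P n)" for n
  have xw: "(x n, w n) \<in> H" "y n = w n - scaleC l (x n)" for n
    using P[of n] unfolding x_def w_def by auto
  have "Cauchy x"
  proof (rule CauchyI)
    fix e :: real assume "0 < e"
    then obtain M where M: "\<forall>m\<ge>M. \<forall>n\<ge>M. norm (y m - y n) < e * \<bar>Im l\<bar>"
      using CauchyD[OF LIMSEQ_imp_Cauchy[OF \<open>y \<longlonglongrightarrow> y0\<close>], of "e * \<bar>Im l\<bar>"] \<open>Im l \<noteq> 0\<close> by auto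
    show "\<exists>M. \<forall>m\<ge>M. \<forall>n\<ge>M. norm (x m - x n) < e"
    proof (intro exI allI impI)
      fix m n assume "M \<le> m" "M \<le> n"
      have "(x m - x n, w m - w n) \<in> H" by (rule is_op_diff[OF self_adjoint_opD(1)[OF sa] xw(1) xw(1)])
      then have "\<bar>Im l\<bar> * norm (x m - x n) \<le> norm ((w m - w n) - scaleC l (x m - x n))"
        by (rule self_adjoint_op_shift_bound[OF sa])
      also have "(w m - w n) - scaleC l (x m - x n) = y m - y n"
        using xw(2) by (simp add: scaleC_diff_right)
      also have "norm (y m - y n) < e * \<bar>Im l\<bar>" using M \<open>M \<le> m\<close> \<open>M \<le> n\<close> by blast
      finally show "norm (x m - x n) < e" using \<open>Im l \<noteq> 0\<close> by (simp add: mult.commute)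
    qed
  qed
  then obtain x0 where "x \<longlonglongrightarrow> x0" using Cauchy_convergent_iff convergentD by blast
  have "(\<lambda>n. y n + scaleC l (x n)) \<longlonglongrightarrow> y0 + scaleC l x0"
    by (intro tendsto_add \<open>y \<longlonglongrightarrow> y0\<close> bounded_linear.tendsto[OF bounded_linear_scaleC \<open>x \<longlonglongrightarrow> x0\<close>])
  then have "w \<longlonglongrightarrow> y0 + scaleC l x0" using xw(2) by simp
  then have "(x0, y0 + scaleC l x0) \<in> op_adj H"
    using op_adj_closed_sequentially[of x w H x0] xw(1) \<open>x \<longlonglongrightarrow> x0\<close> self_adjoint_opD(2)[OF sa]
    by auto
  then have "(x0, y0 + scaleC l x0) \<in> H" using self_adjoint_opD(2)[OF sa] by simp
  moreover have "y0 = (y0 + scaleC l x0) - scaleC l x0" by simp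
  ultimately show "y0 \<in> {w - scaleC l x | x w. (x, w) \<in> H}" by blast
qed

lemma self_adjoint_op_shift_surj:
  fixes H :: "'a::chilbert lop"
  assumes sa: "self_adjoint_op H" and "Im l \<noteq> 0"
  shows "\<exists>x w. (x, w) \<in> H \<and> y = w - scaleC l x"
proof -
  let ?Rg = "{w - scaleC l x | x w. (x, w) \<in> H}"
  obtain p where "p \<in> ?Rg" and res: "y - p \<in> ortho_compl ?Rg"
    using orthogonal_projection_exists[OF closed_self_adjoint_op_shift_range[OF assms]
        csubspace_op_shift_range[OF self_adjoint_opD(1)[OF sa]]] by blast
  let ?r = "y - p"
  \<comment> \<open>\<open>?r\<close> is orthogonal to the range of \<open>H - l\<close>, so it lies in the kernel of \<open>H - cnj l\<close>\<close>
  have "(?r, scaleC (cnj l) ?r) \<in> op_adj H"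
    unfolding op_adj_def
  proof clarsimp
    fix x w assume "(x, w) \<in> H"
    then have "cinner (w - scaleC l x) ?r = 0" using ortho_compl_orth_right[OF res] by blast
    then show "cinner w ?r = cinner x (scaleC (cnj l) ?r)"
      by (simp add: cinner_diff_left cinner_scaleC_left cinner_scaleC_right)
  qed
  then have "(?r, scaleC (cnj l) ?r) \<in> H" using self_adjoint_opD(2)[OF sa] by simp
  from self_adjoint_op_shift_bound[OF sa this, of "cnj l"] have "\<bar>Im l\<bar> * norm ?r \<le> 0" by simp
  then have "?r = 0" using \<open>Im l \<noteq> 0\<close> by (simp add: mult_le_0_iff)
  then show ?thesis using \<open>p \<in> ?Rg\<close> by auto
qed

lemma self_adjoint_op_nonreal_resolvent:
  fixes H :: "'a::chilbert lop"
  assumes "self_adjoint_op H" and "Im l \<noteq> 0"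
  shows "l \<in> op_resolvent_set H"
  using assms self_adjoint_opD(1) self_adjoint_op_shift_bound self_adjoint_op_shift_surj
  by (intro op_resolvent_set_intro[where c="\<bar>Im l\<bar>"]) auto

lemma similar_to_self_adjoint_real_spectrum:
  assumes "similar_to_self_adjoint (B::'a::chilbert lop)"
  shows "op_spectrum B \<subseteq> \<real>"
proof
  fix l assume l: "l \<in> op_spectrum B"
  obtain W H where W: "bounded_clinear W" "bij W" "bounded_clinear (inv W)"
    and "self_adjoint_op H" and B: "B = {(x, y). (W x, W y) \<in> H}"
    using assms unfolding similar_to_self_adjoint_def by blast
  show "l \<in> \<real>"
  proof (rule ccontr)
    assume "l \<notin> \<real>"
    then have "l \<in> op_resolvent_set B" unfolding B
      by (intro op_resolvent_set_similar W self_adjoint_op_nonreal_resolvent \<open>self_adjoint_op H\<close>)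
        (simp add: complex_is_Real_iff)
    then show False using l unfolding op_spectrum_def by simp
  qed
qed

section \<open>Cayley transforms\<close>

text \<open>The graph of \<open>i(T + I)(T - I)\<^sup>-\<^sup>1\<close>, the inverse Cayley transform of \<open>T\<close>.\<close>

definition cayley_graph :: "('a::chilbert \<Rightarrow> 'a) \<Rightarrow> 'a lop" where
  "cayley_graph T = {(T v - v, scaleC \<i> (T v + v)) | v. True}"

lemma cayley_pair_eq:
  fixes a b c d :: "'a::chilbert"
  assumes "a - b = c - d" and "scaleC \<i> (a + b) = scaleC \<i> (c + d)"
  shows "a = c" and "b = d"
proof -
  have "scaleC \<i> (scaleC \<i> (a + b)) = scaleC \<i> (scaleC \<i> (c + d))" using assms(2) by simp
  then have sum: "a + b = c + d" by (simp only: scaleC_i_scaleC_i neg_equal_iff_equal)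
  have "scaleR 2 x = (x + y) + (x - y)" "scaleR 2 y = (x + y) - (x - y)" for x y :: 'a
    by (simp_all add: scaleR_2 algebra_simps)
  then have "scaleR 2 a = scaleR 2 c" "scaleR 2 b = scaleR 2 d" using sum assms(1) by metis+
  then show "a = c" "b = d" by simp_all
qed

lemma cayley_adjoint_iff:
  fixes a b c d :: "'a::chilbert"
  shows "cinner (scaleC \<i> (a + b)) (c - d) = cinner (a - b) (scaleC \<i> (c + d))
    \<longleftrightarrow> cinner a c = cinner b d"
proof -
  have "cinner (scaleC \<i> (a + b)) (c - d) - cinner (a - b) (scaleC \<i> (c + d))
      = 2 * \<i> * (cinner a c - cinner b d)"
    by (simp add: cinner_add_left cinner_add_right cinner_diff_left cinner_diff_right
        cinner_scaleC_left cinner_scaleC_right algebra_simps)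
  then show ?thesis by (metis eq_iff_diff_eq_0 mult_eq_0_iff complex_i_not_zero zero_neq_numeral)
qed

lemma cayley_graph_of_resolvent:
  fixes B :: "'a::chilbert lop"
  assumes "is_op B" and R: "bounded_clinear R" "\<And>y. (R y, y + scaleC \<i> (R y)) \<in> B"
    "\<And>x w. (x, w) \<in> B \<Longrightarrow> R (w - scaleC \<i> x) = x"
  shows "B = cayley_graph (\<lambda>y. y + scaleC (2 * \<i>) (R y))"
    (is "B = cayley_graph ?T")
proof (intro set_eqI iffI)
  fix p assume "p \<in> B"
  then obtain x z where p: "p = (x, z)" and "(x, z) \<in> B" by (cases p) auto
  let ?y = "z - scaleC \<i> x"
  define v where "v = scaleC (- \<i> / 2) ?y"
  have y_eq: "scaleC (2 * \<i>) v = ?y" unfolding v_def by (simp add: scaleC_scaleC scaleC_one)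
  have "?T v - v = R (scaleC (2 * \<i>) v)" by (simp add: clinear_scaleC[OF R(1)])
  also have "\<dots> = x" unfolding y_eq by (rule R(3)[OF \<open>(x, z) \<in> B\<close>])
  finally have x_eq: "?T v - v = x" .
  then have "scaleC \<i> (?T v + v) = scaleC \<i> x + (scaleC \<i> v + scaleC \<i> v)"
    by (simp add: scaleC_add_right algebra_simps)
  also have "scaleC \<i> v + scaleC \<i> v = ?y" unfolding y_eq[symmetric] by (rule scaleC_double[symmetric])
  finally have "scaleC \<i> (?T v + v) = z" by simp
  with x_eq show "p \<in> cayley_graph ?T" unfolding p cayley_graph_def by blast
next
  fix p assume "p \<in> cayley_graph ?T"
  then obtain v where p: "p = (?T v - v, scaleC \<i> (?T v + v))" unfolding cayley_graph_def by blast
  have "?T v + v = (v + v) + scaleC (2 * \<i>) (R v)" by (simp add: algebra_simps)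
  then have "scaleC \<i> (?T v + v) = (scaleC \<i> v + scaleC \<i> v) + scaleC (\<i> * (2 * \<i>)) (R v)"
    by (simp only: scaleC_add_right scaleC_scaleC)
  also have "\<dots> = scaleC (2 * \<i>) v + scaleC (2 * \<i> * \<i>) (R v)"
    by (simp only: scaleC_double[symmetric] mult.commute)
  also have "\<dots> = scaleC (2 * \<i>) (v + scaleC \<i> (R v))" by (simp only: scaleC_add_right scaleC_scaleC)
  finally show "p \<in> B"
    unfolding p using is_op_scaleC[OF \<open>is_op B\<close> R(2), of "2 * \<i>" v] by simp
qed

lemma cayley_transform_exists:
  fixes B :: "'a::chilbert lop"
  assumes "is_op B" and "\<i> \<in> op_resolvent_set B" and "- \<i> \<in> op_resolvent_set B"
  obtains T where "bounded_clinear T" "bij T" "bounded_clinear (inv T)" "B = cayley_graph T"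
proof -
  obtain Rp where Rp: "bounded_clinear Rp" "\<And>y. (Rp y, y + scaleC \<i> (Rp y)) \<in> B"
    "\<And>x w. (x, w) \<in> B \<Longrightarrow> Rp (w - scaleC \<i> x) = x"
    using assms(2) unfolding op_resolvent_set_def by blast
  obtain Rm where Rm: "bounded_clinear Rm" "\<And>y. (Rm y, y + scaleC (- \<i>) (Rm y)) \<in> B"
    "\<And>x w. (x, w) \<in> B \<Longrightarrow> Rm (w - scaleC (- \<i>) x) = x"
    using assms(3) unfolding op_resolvent_set_def by blast
  define T where "T y = y + scaleC (2 * \<i>) (Rp y)" for y
  define T' where "T' y = y - scaleC (2 * \<i>) (Rm y)" for y
  have "bounded_clinear T" unfolding T_def
    by (rule bounded_clinear_add[OF bounded_clinear_ident
          bounded_clinear_compose[OF bounded_clinear_scaleC Rp(1)]])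
  have "bounded_clinear T'" unfolding T'_def
    by (rule bounded_clinear_diff[OF bounded_clinear_ident
          bounded_clinear_compose[OF bounded_clinear_scaleC Rm(1)]])
  have "T (T' y) = y" for y
  proof -
    have "(y + scaleC (- \<i>) (Rm y)) - scaleC \<i> (Rm y) = T' y"
      unfolding T'_def by (simp add: scaleC_double scaleC_minus_left)
    with Rp(3)[OF Rm(2)[of y]] have "Rp (T' y) = Rm y" by (simp only:)
    then show ?thesis unfolding T_def by (simp add: T'_def)
  qed
  moreover have "T' (T y) = y" for y
  proof -
    have "(y + scaleC \<i> (Rp y)) - scaleC (- \<i>) (Rp y) = T y"
      unfolding T_def by (simp add: scaleC_double scaleC_minus_left)
    with Rm(3)[OF Rp(2)[of y]] have "Rm (T y) = Rp y" by (simp only:)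
    then show ?thesis unfolding T'_def by (simp add: T_def)
  qed
  ultimately have "bij T" "inv T = T'" using inv_bij_eq by metis+
  moreover have "B = cayley_graph T"
    unfolding T_def by (rule cayley_graph_of_resolvent[OF assms(1) Rp])
  ultimately show ?thesis using that \<open>bounded_clinear T\<close> \<open>bounded_clinear T'\<close> by metis
qed

lemma cayley_graph_similar:
  assumes Z: "bounded_clinear Z" "bij Z" and intertwines: "\<And>x. Z (T x) = U (Z x)"
  shows "cayley_graph T = {(x, y). (Z x, Z y) \<in> cayley_graph U}"
proof (intro set_eqI iffI)
  fix p assume "p \<in> cayley_graph T"
  then obtain v where "p = (T v - v, scaleC \<i> (T v + v))" unfolding cayley_graph_def by blast
  then show "p \<in> {(x, y). (Z x, Z y) \<in> cayley_graph U}"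
    unfolding cayley_graph_def
    by (auto simp: clinear_diff[OF Z(1)] clinear_add[OF Z(1)] clinear_scaleC[OF Z(1)] intertwines)
next
  fix p assume "p \<in> {(x, y). (Z x, Z y) \<in> cayley_graph U}"
  then obtain x y u where p: "p = (x, y)" and u: "Z x = U u - u" "Z y = scaleC \<i> (U u + u)"
    unfolding cayley_graph_def by auto
  define v where "v = inv Z u"
  have Zv: "Z v = u" unfolding v_def using Z(2) by (simp add: bij_is_surj surj_f_inv_f)
  have "Z (T v - v) = Z x" "Z (scaleC \<i> (T v + v)) = Z y"
    using u by (simp_all add: clinear_diff[OF Z(1)] clinear_add[OF Z(1)] clinear_scaleC[OF Z(1)]
        intertwines Zv)
  then have "T v - v = x" "scaleC \<i> (T v + v) = y" using bij_is_inj[OF Z(2)] by (simp_all add: inj_eq)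
  then show "p \<in> cayley_graph T" unfolding p cayley_graph_def by blast
qed

lemma J_self_adjoint_extension_subset_op_adj:
  assumes J: "fundamental_symmetry J" and "commutes_with J S" and "S \<subseteq> B"
    and "J_self_adjoint J B"
  shows "B \<subseteq> op_adj S"
proof
  fix p assume "p \<in> B"
  then obtain x w where p: "p = (x, w)" and "(x, w) \<in> B" by (cases p) auto
  then have "(x, J w) \<in> op_comp_left J B" unfolding op_comp_left_def by blast
  then have "(x, J w) \<in> op_comp_right (op_adj B) J"
    using \<open>J_self_adjoint J B\<close> unfolding J_self_adjoint_def by simp
  then have "(J x, J w) \<in> op_adj B" unfolding op_comp_right_def by simp
  show "p \<in> op_adj S"
    unfolding p op_adj_def
  proof clarsimp
    fix u v assume "(u, v) \<in> S"
    then have "(J u, J v) \<in> B" using \<open>commutes_with J S\<close> \<open>S \<subseteq> B\<close> unfolding commutes_with_def by blast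
    then have "cinner (J v) (J x) = cinner (J u) (J w)"
      using \<open>(J x, J w) \<in> op_adj B\<close> unfolding op_adj_def by blast
    then show "cinner v x = cinner u w" using J unfolding fundamental_symmetry_def by simp
  qed
qed

locale wandering_shift = unitary U for U :: "'a::chilbert \<Rightarrow> 'a" +
  fixes W0 :: "'a set"
  assumes csubspace_W0: "csubspace W0" and closed_W0: "closed W0"
    and wandering:
      "\<And>m n x y. m \<noteq> n \<Longrightarrow> x \<in> W0 \<Longrightarrow> y \<in> W0 \<Longrightarrow> cinner (upow U m x) (upow U n y) = 0"
    and generating: "closure (span (\<Union>n. upow U n ` W0)) = UNIV"

lemma bilateral_shift_wandering_shift: "bilateral_shift U W0 \<Longrightarrow> wandering_shift U W0"
  unfolding bilateral_shift_def by (intro wandering_shift.intro unitary.intro wandering_shift_axioms.intro) auto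

context wandering_shift
begin

definition proj_W0 :: "'a \<Rightarrow> 'a" where
  "proj_W0 x = (SOME p. p \<in> W0 \<and> x - p \<in> ortho_compl W0)"

lemma proj_W0_mem: "proj_W0 x \<in> W0" and proj_W0_residual: "x - proj_W0 x \<in> ortho_compl W0"
proof -
  have "\<exists>p. p \<in> W0 \<and> x - p \<in> ortho_compl W0"
    using orthogonal_projection_exists[OF closed_W0 csubspace_W0] by blast
  then have "proj_W0 x \<in> W0 \<and> x - proj_W0 x \<in> ortho_compl W0" unfolding proj_W0_def by (rule someI_ex)
  then show "proj_W0 x \<in> W0" "x - proj_W0 x \<in> ortho_compl W0" by auto
qed

lemma upow_W0_ortho_compl: "n \<noteq> 0 \<Longrightarrow> w \<in> W0 \<Longrightarrow> upow U n w \<in> ortho_compl W0"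
  unfolding ortho_compl_def using wandering[of n 0 w] by auto

lemma bessel_inequality: "(\<Sum>k<N. (norm (proj_W0 (upow U (int k) x)))\<^sup>2) \<le> (norm x)\<^sup>2"
proof -
  define q where "q k = upow U (- int k) (proj_W0 (upow U (int k) x))" for k
  have q_orth: "cinner (q j) (q k) = 0" if "j \<noteq> k" for j k
    unfolding q_def using that by (intro wandering proj_W0_mem) auto
  have x_q_orth: "cinner (x - q j) (q j) = 0" for j
  proof -
    have "cinner (x - q j) (q j) = cinner (upow U (int j) (x - q j)) (upow U (int j) (q j))"
      by (simp add: cinner_upow)
    also have "upow U (int j) (x - q j) = upow U (int j) x - proj_W0 (upow U (int j) x)"
      by (simp add: clinear_diff[OF bounded_clinear_upow] q_def)
    also have "upow U (int j) (q j) = proj_W0 (upow U (int j) x)" by (simp add: q_def)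
    finally show ?thesis using ortho_compl_orth_left[OF proj_W0_residual proj_W0_mem] by simp
  qed
  define s where "s = sum q {..<N}"
  have "cinner (x - s) (q j) = 0" if "j < N" for j
  proof -
    have "cinner s (q j) = cinner (q j) (q j) + (\<Sum>k\<in>{..<N} - {j}. cinner (q k) (q j))"
      unfolding s_def cinner_sum_left using that by (simp add: sum.remove)
    also have "(\<Sum>k\<in>{..<N} - {j}. cinner (q k) (q j)) = 0" by (intro sum.neutral) (auto intro: q_orth)
    finally show ?thesis using x_q_orth[of j] by (simp add: cinner_diff_left)
  qed
  then have "cinner (x - s) s = 0" unfolding s_def cinner_sum_right by simp
  then have "(norm ((x - s) + s))\<^sup>2 = (norm (x - s))\<^sup>2 + (norm s)\<^sup>2"
    by (intro norm_add_Pythagorean orthogonal_if_cinner_eq_0)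
  moreover have "(norm s)\<^sup>2 = (\<Sum>k<N. (norm (q k))\<^sup>2)"
    unfolding s_def
    by (rule norm_sum_Pythagorean) (auto simp: pairwise_def intro: orthogonal_if_cinner_eq_0 q_orth)
  ultimately show ?thesis by (simp add: q_def)
qed

text \<open>A fixed vector has the same component in every \<open>U\<^sup>n W\<^sub>0\<close>, so by Bessel's inequality this
  component vanishes.\<close>

lemma fixed_point_eq_0:
  assumes fixed: "U x = x"
  shows "x = 0"
proof -
  have "proj_W0 x = 0"
  proof (rule ccontr)
    assume "proj_W0 x \<noteq> 0"
    then have pos: "0 < (norm (proj_W0 x))\<^sup>2" by simp
    obtain N :: nat where "(norm x)\<^sup>2 / (norm (proj_W0 x))\<^sup>2 < N" using reals_Archimedean2 by blast
    then have "(norm x)\<^sup>2 < N * (norm (proj_W0 x))\<^sup>2" using pos by (simp add: field_simps)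
    with bessel_inequality[of x N] show False by (simp add: upow_fixed_point[OF fixed])
  qed
  then have "x \<in> ortho_compl W0" using proj_W0_residual[of x] by simp
  have "(\<Union>n. upow U n ` W0) \<subseteq> ortho_compl {x}"
  proof
    fix y assume "y \<in> (\<Union>n. upow U n ` W0)"
    then obtain n w where "w \<in> W0" "y = upow U n w" by blast
    then have "cinner y x = cinner (upow U n w) (upow U n x)" by (simp add: upow_fixed_point[OF fixed])
    also have "\<dots> = 0"
      using cinner_upow ortho_compl_orth_right[OF \<open>x \<in> ortho_compl W0\<close> \<open>w \<in> W0\<close>] by simp
    finally show "y \<in> ortho_compl {x}" unfolding ortho_compl_def by simp
  qed
  then have "span (\<Union>n. upow U n ` W0) \<subseteq> ortho_compl {x}"
    by (rule span_minimal[OF _ csubspace_subspace[OF csubspace_ortho_compl]])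
  then have "closure (span (\<Union>n. upow U n ` W0)) \<subseteq> ortho_compl {x}"
    by (rule closure_minimal[OF _ closed_ortho_compl])
  then have "x \<in> ortho_compl {x}" using generating by auto
  then show "x = 0" unfolding ortho_compl_def by simp
qed

lemma is_op_cayley_graph: "is_op (cayley_graph U)"
  unfolding is_op_def cayley_graph_def
proof (intro conjI allI impI ballI)
  show "(0, 0) \<in> {(U u - u, scaleC \<i> (U u + u)) | u. True}"
    by (intro CollectI exI[of _ 0]) (simp add: clinear_zero[OF bounded_clinear_U])
next
  fix p q assume "p \<in> {(U u - u, scaleC \<i> (U u + u)) | u. True}" "q \<in> {(U u - u, scaleC \<i> (U u + u)) | u. True}"
  then obtain u v where "p = (U u - u, scaleC \<i> (U u + u))" "q = (U v - v, scaleC \<i> (U v + v))" by blast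
  then show "p + q \<in> {(U u - u, scaleC \<i> (U u + u)) | u. True}"
    by (intro CollectI exI[of _ "u + v"])
      (simp add: clinear_add[OF bounded_clinear_U] scaleC_add_right algebra_simps)
next
  fix c x y assume "(x, y) \<in> {(U u - u, scaleC \<i> (U u + u)) | u. True}"
  then obtain u where "x = U u - u" "y = scaleC \<i> (U u + u)" by blast
  then show "(scaleC c x, scaleC c y) \<in> {(U u - u, scaleC \<i> (U u + u)) | u. True}"
    by (intro CollectI exI[of _ "scaleC c u"])
      (simp add: clinear_scaleC[OF bounded_clinear_U] scaleC_add_right scaleC_diff_right scaleC_scaleC
        mult.commute)
next
  fix y assume "(0, y) \<in> {(U u - u, scaleC \<i> (U u + u)) | u. True}"
  then obtain u where "0 = U u - u" "y = scaleC \<i> (U u + u)" by blast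
  then show "y = 0" using fixed_point_eq_0[of u] by (simp add: clinear_zero[OF bounded_clinear_U])
qed

lemma dense_Domain_cayley_graph: "closure (Domain (cayley_graph U)) = UNIV"
proof -
  have dom: "Domain (cayley_graph U) = range (\<lambda>u. U u - u)" unfolding cayley_graph_def by auto
  have "csubspace (range (\<lambda>u. U u - u))"
    unfolding csubspace_def
  proof (intro conjI ballI allI)
    show "0 \<in> range (\<lambda>u. U u - u)"
      by (rule range_eqI[of _ _ 0]) (simp add: clinear_zero[OF bounded_clinear_U])
  next
    fix a b assume "a \<in> range (\<lambda>u. U u - u)" "b \<in> range (\<lambda>u. U u - u)"
    then obtain u v where "a = U u - u" "b = U v - v" by blast
    then show "a + b \<in> range (\<lambda>u. U u - u)"
      by (intro range_eqI[of _ _ "u + v"]) (simp add: clinear_add[OF bounded_clinear_U] algebra_simps)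
  next
    fix c a assume "a \<in> range (\<lambda>u. U u - u)"
    then obtain u where "a = U u - u" by blast
    then show "scaleC c a \<in> range (\<lambda>u. U u - u)"
      by (intro range_eqI[of _ _ "scaleC c u"])
        (simp add: clinear_scaleC[OF bounded_clinear_U] scaleC_diff_right)
  qed
  then have "closure (range (\<lambda>u. U u - u)) = UNIV"
  proof (rule dense_if_ortho_compl_trivial)
    fix y assume "\<And>m. m \<in> range (\<lambda>u. U u - u) \<Longrightarrow> cinner m y = 0"
    then have "cinner (U u - u) y = 0" for u by blast
    then have "cinner u (inv U y) = cinner u y" for u by (simp add: cinner_diff_left cinner_inv_U_right)
    then have "inv U y = y" by (rule cinner_eq_right)
    then show "y = 0" by (metis U_inv_U fixed_point_eq_0)
  qed
  then show ?thesis using dom by simp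
qed

lemma op_adj_cayley_graph: "op_adj (cayley_graph U) = cayley_graph U"
proof (intro set_eqI iffI)
  fix p assume "p \<in> cayley_graph U"
  then obtain u where p: "p = (U u - u, scaleC \<i> (U u + u))" unfolding cayley_graph_def by blast
  show "p \<in> op_adj (cayley_graph U)"
    unfolding p op_adj_def cayley_graph_def by (auto simp: cayley_adjoint_iff cinner_U)
next
  fix p assume p_adj: "p \<in> op_adj (cayley_graph U)"
  obtain y z where p: "p = (y, z)" by (cases p)
  have rel: "cinner (scaleC \<i> (U u + u)) y = cinner (U u - u) z" for u
    using p_adj unfolding p op_adj_def cayley_graph_def by blast
  \<comment> \<open>\<open>y = U u - u\<close> and \<open>z = i(U u + u)\<close> are solved by \<open>U u = (i/2)a\<close>, \<open>u = (i/2)b\<close>:\<close>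
  define a where "a = - (z + scaleC \<i> y)"
  define b where "b = scaleC \<i> y - z"
  have "cinner (U u) a = cinner u b" for u
    using rel[of u] unfolding a_def b_def
    by (simp add: cinner_diff_left cinner_diff_right cinner_add_left cinner_add_right
        cinner_minus_right cinner_scaleC_left cinner_scaleC_right algebra_simps)
  then have "cinner u (inv U a) = cinner u b" for u by (simp add: cinner_inv_U_right)
  then have "inv U a = b" by (rule cinner_eq_right)
  define u where "u = scaleC (\<i> / 2) b"
  have Uu: "U u = scaleC (\<i> / 2) a"
    unfolding u_def using \<open>inv U a = b\<close> by (metis U_inv_U clinear_scaleC[OF bounded_clinear_U])
  have double: "x + x = scaleC 2 x" for x :: 'a using scaleC_of_real[of 2 x] by (simp add: scaleR_2)
  have "a - b = scaleC (- (2 * \<i>)) y"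
    unfolding a_def b_def by (simp add: algebra_simps double scaleC_scaleC scaleC_minus_left flip: diff_conv_add_uminus)
  then have "U u - u = y" using Uu by (simp add: u_def scaleC_diff_right[symmetric] scaleC_scaleC scaleC_one)
  have "a + b = scaleC (- 2) z" unfolding a_def b_def by (simp add: double scaleC_minus_left scaleC_minus_right)
  then have "scaleC \<i> (U u + u) = z"
    using Uu by (simp add: u_def scaleC_add_right[symmetric] scaleC_scaleC scaleC_one)
  with \<open>U u - u = y\<close> show "p \<in> cayley_graph U" unfolding p cayley_graph_def by blast
qed

lemma self_adjoint_cayley_graph: "self_adjoint_op (cayley_graph U)"
  unfolding self_adjoint_op_def dense_op_def
  using is_op_cayley_graph dense_Domain_cayley_graph op_adj_cayley_graph by blast

end

section \<open>Intertwining a perturbed shift with the shift\<close>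

context wandering_shift
begin

text \<open>For \<open>T = U(I + D)\<close> with \<open>D\<close> confined to \<open>W\<^sub>0\<close>, the operator
  \<open>intertwiner D = I + \<Sum>\<^sub>n\<^sub>\<ge>\<^sub>0 U\<^sup>-\<^sup>n D U\<^sup>n\<close> satisfies \<open>intertwiner D \<circ> T = U \<circ> intertwiner D\<close>.\<close>

definition confined :: "('a \<Rightarrow> 'a) \<Rightarrow> bool" where
  "confined D \<longleftrightarrow> bounded_clinear D \<and> (\<forall>v\<in>ortho_compl W0. D v = 0) \<and> (\<forall>y. D y \<in> W0)"

definition shift_conj :: "('a \<Rightarrow> 'a) \<Rightarrow> nat \<Rightarrow> 'a \<Rightarrow> 'a" where
  "shift_conj D n x = upow U (- int n) (D (upow U (int n) x))"

definition intertwiner :: "('a \<Rightarrow> 'a) \<Rightarrow> 'a \<Rightarrow> 'a" where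
  "intertwiner D x = x + (\<Sum>n. shift_conj D n x)"

lemma confined_intro:
  assumes D: "bounded_clinear D" and "\<And>v. v \<in> ortho_compl W0 \<Longrightarrow> D v = 0"
    and "\<And>w. w \<in> W0 \<Longrightarrow> D w \<in> W0"
  shows "confined D"
proof -
  have "D y = D (proj_W0 y)" for y
    using clinear_add[OF D, of "proj_W0 y" "y - proj_W0 y"] assms(2)[OF proj_W0_residual] by simp
  then show ?thesis unfolding confined_def using assms proj_W0_mem by metis
qed

lemma confined_bound:
  assumes "confined D"
  obtains K where "K > 0" "\<And>y. norm (D y) \<le> K * norm (proj_W0 y)"
proof -
  obtain K where "K > 0" and K: "\<And>z. norm (D z) \<le> norm z * K"
    using assms bounded_clinear_pos_bounded unfolding confined_def by blast
  have "D y = D (proj_W0 y)" for y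
    using assms clinear_add[of D "proj_W0 y" "y - proj_W0 y"] proj_W0_residual[of y]
    unfolding confined_def by simp
  then show ?thesis using that \<open>K > 0\<close> K by (metis mult.commute)
qed

lemma bounded_clinear_shift_conj: "confined D \<Longrightarrow> bounded_clinear (shift_conj D n)"
  unfolding shift_conj_def confined_def
  by (intro bounded_clinear_compose[OF bounded_clinear_upow] bounded_clinear_compose[OF _ bounded_clinear_upow]) auto

lemma cinner_shift_conj:
  "confined D \<Longrightarrow> confined D' \<Longrightarrow> j \<noteq> k \<Longrightarrow> cinner (shift_conj D j x) (shift_conj D' k x') = 0"
  unfolding shift_conj_def confined_def by (intro wandering) auto

lemma norm_sum_shift_conj:
  assumes "confined D" and K: "\<And>y. norm (D y) \<le> K * norm (proj_W0 y)" and "finite A"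
  shows "(norm (\<Sum>k\<in>A. shift_conj D k x))\<^sup>2 \<le> K\<^sup>2 * (\<Sum>k\<in>A. (norm (proj_W0 (upow U (int k) x)))\<^sup>2)"
proof -
  have "(norm (\<Sum>k\<in>A. shift_conj D k x))\<^sup>2 = (\<Sum>k\<in>A. (norm (shift_conj D k x))\<^sup>2)"
    using \<open>finite A\<close> cinner_shift_conj[OF \<open>confined D\<close> \<open>confined D\<close>]
    by (intro norm_sum_Pythagorean) (auto simp: pairwise_def intro: orthogonal_if_cinner_eq_0)
  also have "\<dots> \<le> (\<Sum>k\<in>A. K\<^sup>2 * (norm (proj_W0 (upow U (int k) x)))\<^sup>2)"
  proof (rule sum_mono)
    fix k
    have "norm (shift_conj D k x) \<le> K * norm (proj_W0 (upow U (int k) x))"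
      unfolding shift_conj_def norm_upow by (rule K)
    then show "(norm (shift_conj D k x))\<^sup>2 \<le> K\<^sup>2 * (norm (proj_W0 (upow U (int k) x)))\<^sup>2"
      by (metis norm_ge_zero power_mono power_mult_distrib)
  qed
  finally show ?thesis by (simp add: sum_distrib_left)
qed

lemma summable_shift_conj:
  assumes "confined D"
  shows "summable (\<lambda>n. shift_conj D n x)"
proof (rule summable_Cauchy[THEN iffD2], intro allI impI)
  obtain K where "K > 0" and K: "\<And>y. norm (D y) \<le> K * norm (proj_W0 y)"
    using confined_bound[OF assms] by blast
  define a where "a n = (norm (proj_W0 (upow U (int n) x)))\<^sup>2" for n
  have "summable a"
    unfolding a_def by (rule summableI_nonneg_bounded[OF _ bessel_inequality]) simp
  fix e :: real assume "0 < e"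
  then have "0 < e\<^sup>2 / (K\<^sup>2 + 1)" by (intro divide_pos_pos) (auto simp: add_nonneg_pos)
  then obtain N where N: "\<forall>m\<ge>N. \<forall>n. norm (sum a {m..<n}) < e\<^sup>2 / (K\<^sup>2 + 1)"
    using \<open>summable a\<close> unfolding summable_Cauchy by blast
  show "\<exists>N. \<forall>m\<ge>N. \<forall>n. norm (\<Sum>k = m..<n. shift_conj D k x) < e"
  proof (intro exI allI impI)
    fix m n assume "N \<le> m"
    then have small: "sum a {m..<n} < e\<^sup>2 / (K\<^sup>2 + 1)" using N by (simp add: abs_less_iff)
    have "(norm (\<Sum>k = m..<n. shift_conj D k x))\<^sup>2 \<le> K\<^sup>2 * sum a {m..<n}"
      unfolding a_def by (rule norm_sum_shift_conj[OF assms K]) simp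
    also have "\<dots> \<le> K\<^sup>2 * (e\<^sup>2 / (K\<^sup>2 + 1))"
      using small by (intro mult_left_mono) auto
    also have "\<dots> < e\<^sup>2"
    proof -
      have "0 < K\<^sup>2 + 1" by (simp add: add_nonneg_pos)
      moreover have "K\<^sup>2 * e\<^sup>2 < (K\<^sup>2 + 1) * e\<^sup>2" using \<open>0 < e\<close> by simp
      ultimately show ?thesis by (simp add: field_simps)
    qed
    finally show "norm (\<Sum>k = m..<n. shift_conj D k x) < e"
      using \<open>0 < e\<close> by (simp add: power_less_imp_less_base)
  qed
qed

lemma norm_suminf_shift_conj:
  assumes "confined D"
  obtains K where "K > 0" "\<And>x. norm (\<Sum>n. shift_conj D n x) \<le> K * norm x"
proof -
  obtain K where "K > 0" and K: "\<And>y. norm (D y) \<le> K * norm (proj_W0 y)"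
    using confined_bound[OF assms] by blast
  have "norm (\<Sum>n. shift_conj D n x) \<le> K * norm x" for x
  proof (rule LIMSEQ_le_const2)
    show "(\<lambda>N. norm (\<Sum>k<N. shift_conj D k x)) \<longlonglongrightarrow> norm (\<Sum>n. shift_conj D n x)"
      by (intro tendsto_norm summable_LIMSEQ summable_shift_conj assms)
    show "\<exists>N. \<forall>n\<ge>N. norm (\<Sum>k<n. shift_conj D k x) \<le> K * norm x"
    proof (intro exI allI impI)
      fix N :: nat
      have "(norm (\<Sum>k<N. shift_conj D k x))\<^sup>2
          \<le> K\<^sup>2 * (\<Sum>k<N. (norm (proj_W0 (upow U (int k) x)))\<^sup>2)"
        by (rule norm_sum_shift_conj[OF assms K]) simp
      also have "\<dots> \<le> K\<^sup>2 * (norm x)\<^sup>2" by (intro mult_left_mono bessel_inequality) simp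
      also have "\<dots> = (K * norm x)\<^sup>2" by (simp add: power_mult_distrib)
      finally show "norm (\<Sum>k<N. shift_conj D k x) \<le> K * norm x"
        using \<open>K > 0\<close> by (meson norm_ge_zero power2_le_imp_le mult_nonneg_nonneg less_imp_le)
    qed
  qed
  with \<open>K > 0\<close> that show ?thesis by blast
qed

lemma bounded_clinear_intertwiner:
  assumes "confined D"
  shows "bounded_clinear (intertwiner D)"
proof -
  obtain K where K: "\<And>x. norm (\<Sum>n. shift_conj D n x) \<le> K * norm x"
    using norm_suminf_shift_conj[OF assms] by blast
  note summable = summable_shift_conj[OF assms]
  show ?thesis
  proof (rule bounded_clinear_intro[where K="1 + K"])
    fix x y
    have "(\<Sum>n. shift_conj D n (x + y)) = (\<Sum>n. shift_conj D n x + shift_conj D n y)"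
      by (simp add: clinear_add[OF bounded_clinear_shift_conj[OF assms]])
    also have "\<dots> = (\<Sum>n. shift_conj D n x) + (\<Sum>n. shift_conj D n y)"
      by (rule suminf_add[OF summable summable, symmetric])
    finally show "intertwiner D (x + y) = intertwiner D x + intertwiner D y"
      unfolding intertwiner_def by (simp add: algebra_simps)
  next
    fix c x
    have "(\<Sum>n. shift_conj D n (scaleC c x)) = (\<Sum>n. scaleC c (shift_conj D n x))"
      by (simp add: clinear_scaleC[OF bounded_clinear_shift_conj[OF assms]])
    also have "\<dots> = scaleC c (\<Sum>n. shift_conj D n x)"
      by (rule bounded_linear.suminf[OF bounded_linear_scaleC summable, symmetric])
    finally show "intertwiner D (scaleC c x) = scaleC c (intertwiner D x)"
      unfolding intertwiner_def by (simp add: scaleC_add_right)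
  next
    fix x
    have "norm (intertwiner D x) \<le> norm x + norm (\<Sum>n. shift_conj D n x)"
      unfolding intertwiner_def by (rule norm_triangle_ineq)
    also have "\<dots> \<le> norm x + K * norm x" using K by simp
    finally show "norm (intertwiner D x) \<le> norm x * (1 + K)" by (simp add: algebra_simps)
  qed
qed

lemma shift_conj_W0: "confined D \<Longrightarrow> w \<in> W0 \<Longrightarrow> n \<noteq> 0 \<Longrightarrow> shift_conj D n w = 0"
  unfolding shift_conj_def confined_def using upow_W0_ortho_compl[of "int n" w]
  by (simp add: clinear_zero[OF bounded_clinear_upow])

lemma shift_conj_shift_conj:
  assumes "confined D" "confined D'" "m \<noteq> n"
  shows "shift_conj D n (shift_conj D' m x) = 0"
proof -
  have "upow U (int n) (shift_conj D' m x) = upow U (int n - int m) (D' (upow U (int m) x))"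
    unfolding shift_conj_def by (simp add: upow_add)
  then have "upow U (int n) (shift_conj D' m x) \<in> ortho_compl W0"
    using upow_W0_ortho_compl \<open>confined D'\<close> \<open>m \<noteq> n\<close> unfolding confined_def by simp
  then show ?thesis
    using \<open>confined D\<close> unfolding shift_conj_def confined_def by (simp add: clinear_zero[OF bounded_clinear_upow])
qed

lemma intertwiner_on_range: "confined D \<Longrightarrow> intertwiner D (D x) = D x + D (D x)"
proof -
  assume "confined D"
  then have "(\<Sum>n. shift_conj D n (D x)) = (\<Sum>n\<in>{0}. shift_conj D n (D x))"
    by (intro suminf_finite) (auto simp: shift_conj_W0 confined_def)
  then show ?thesis unfolding intertwiner_def by (simp add: shift_conj_def)
qed

lemma intertwiner_intertwines:
  assumes "confined D"
  shows "intertwiner D (U (x + D x)) = U (intertwiner D x)"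
proof -
  define y where "y = x + D x"
  note summable = summable_shift_conj[OF assms]
  have "shift_conj D n (U y) = U (shift_conj D (Suc n) y)" for n
  proof -
    have "upow U (int n) (U y) = upow U (int (Suc n)) y"
      using upow_add[of "int n" 1 y] by (simp add: algebra_simps)
    moreover have "U (upow U (- int (Suc n)) z) = upow U (- int n) z" for z
      using upow_add[of 1 "- int (Suc n)" z] by simp
    ultimately show ?thesis unfolding shift_conj_def by simp
  qed
  then have "(\<Sum>n. shift_conj D n (U y)) = (\<Sum>n. U (shift_conj D (Suc n) y))" by simp
  also have "\<dots> = U (\<Sum>n. shift_conj D (Suc n) y)"
    by (rule bounded_linear.suminf[OF bounded_clinear_bounded_linear[OF bounded_clinear_U], symmetric])
      (rule summable_Suc_iff[THEN iffD2, OF summable])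
  also have "(\<Sum>n. shift_conj D (Suc n) y) = (\<Sum>n. shift_conj D n y) - D y"
    using suminf_split_head[OF summable[of y]] by (simp add: shift_conj_def)
  finally have "intertwiner D (U y) = U (y + ((\<Sum>n. shift_conj D n y) - D y))"
    unfolding intertwiner_def by (simp add: clinear_add[OF bounded_clinear_U] clinear_diff[OF bounded_clinear_U])
  also have "y + ((\<Sum>n. shift_conj D n y) - D y) = intertwiner D y - D y"
    unfolding intertwiner_def by simp
  also have "intertwiner D y = intertwiner D x + intertwiner D (D x)"
    unfolding y_def by (rule clinear_add[OF bounded_clinear_intertwiner[OF assms]])
  also have "D y = D x + D (D x)"
    unfolding y_def using assms clinear_add unfolding confined_def by blast
  finally show ?thesis using intertwiner_on_range[OF assms, of x] unfolding y_def by simp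
qed

text \<open>If \<open>(I + D)(I + D') = I\<close>, the intertwiners of \<open>D\<close> and \<open>D'\<close> are mutually inverse: only the
  diagonal terms of the double series survive.\<close>

lemma intertwiner_inverse:
  assumes "confined D" "confined D'" and rel: "\<And>x. D x + D' x + D (D' x) = 0"
  shows "intertwiner D (intertwiner D' x) = x"
proof -
  note sD = summable_shift_conj[OF assms(1)] and sD' = summable_shift_conj[OF assms(2)]
  define C where "C n = upow U (- int n) (D (D' (upow U (int n) x)))" for n
  have diag: "shift_conj D n x + shift_conj D' n x + C n = 0" for n
  proof -
    have "shift_conj D n x + shift_conj D' n x + C n
        = upow U (- int n) (D (upow U (int n) x) + D' (upow U (int n) x) + D (D' (upow U (int n) x)))"
      unfolding shift_conj_def C_def by (simp add: clinear_add[OF bounded_clinear_upow])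
    then show ?thesis by (simp add: rel clinear_zero[OF bounded_clinear_upow])
  qed
  then have "C = (\<lambda>n. - (shift_conj D n x + shift_conj D' n x))" by (metis add_eq_0_iff)
  then have sC: "summable C" by (simp only:) (intro summable_minus summable_add sD sD')
  have terms: "shift_conj D n (intertwiner D' x) = shift_conj D n x + C n" for n
  proof -
    have "shift_conj D n (intertwiner D' x) = shift_conj D n x + shift_conj D n (\<Sum>m. shift_conj D' m x)"
      unfolding intertwiner_def by (rule clinear_add[OF bounded_clinear_shift_conj[OF assms(1)]])
    also have "shift_conj D n (\<Sum>m. shift_conj D' m x) = (\<Sum>m. shift_conj D n (shift_conj D' m x))"
      by (rule bounded_linear.suminf[OF bounded_clinear_bounded_linear[OF
            bounded_clinear_shift_conj[OF assms(1)]] sD'])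
    also have "\<dots> = (\<Sum>m\<in>{n}. shift_conj D n (shift_conj D' m x))"
      by (rule suminf_finite) (use shift_conj_shift_conj[OF assms(1,2)] in auto)
    also have "\<dots> = C n" unfolding C_def shift_conj_def by (simp add: upow_add)
    finally show ?thesis .
  qed
  have "intertwiner D (intertwiner D' x)
      = (x + (\<Sum>n. shift_conj D' n x)) + ((\<Sum>n. shift_conj D n x) + (\<Sum>n. C n))"
    unfolding intertwiner_def[of D] terms
    by (simp only: intertwiner_def[of D' x] suminf_add[OF sD sC, symmetric])
  also have "\<dots> = x + (\<Sum>n. shift_conj D' n x + (shift_conj D n x + C n))"
    using suminf_add[OF sD' summable_add[OF sD sC]] suminf_add[OF sD sC] by (simp add: add.assoc)
  also have "(\<Sum>n. shift_conj D' n x + (shift_conj D n x + C n)) = 0"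
    using diag by (simp add: algebra_simps)
  finally show ?thesis by simp
qed

end

section \<open>Extensions of the Phillips operator with real spectrum\<close>

context wandering_shift
begin

lemma confined_perturbation:
  assumes T: "bounded_clinear T" and on_compl: "\<And>v. v \<in> ortho_compl W0 \<Longrightarrow> T v = U v"
    and on_W0: "\<And>w. w \<in> W0 \<Longrightarrow> inv U (T w) \<in> W0"
  shows "confined (\<lambda>x. inv U (T x) - x)"
proof (rule confined_intro)
  show "bounded_clinear (\<lambda>x. inv U (T x) - x)"
    by (rule bounded_clinear_diff[OF bounded_clinear_compose[OF bounded_clinear_inv_U T] bounded_clinear_ident])
qed (simp_all add: on_compl csubspaceD(4)[OF csubspace_W0] on_W0)

lemma inverse_perturbation_maps_W0:
  assumes T: "bounded_clinear T" and on_compl: "\<And>v. v \<in> ortho_compl W0 \<Longrightarrow> T v = U v"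
    and on_W0: "\<And>w. w \<in> W0 \<Longrightarrow> inv U (T w) \<in> W0"
    and inverse: "\<And>y. T (T' y) = y" and "w \<in> W0"
  shows "T' (U w) \<in> W0"
proof -
  let ?h = "T' (U w)"
  let ?r = "?h - proj_W0 ?h"
  have "U w = T (proj_W0 ?h) + U ?r"
    using inverse[of "U w"] clinear_add[OF T, of "proj_W0 ?h" ?r] on_compl[OF proj_W0_residual] by simp
  then have "?r = w - inv U (T (proj_W0 ?h))"
    by (metis add_diff_cancel_left' inv_U_U clinear_diff[OF bounded_clinear_inv_U])
  also have "\<dots> \<in> W0" by (intro csubspaceD(4)[OF csubspace_W0] \<open>w \<in> W0\<close> on_W0 proj_W0_mem)
  finally have "cinner ?r ?r = 0" by (rule ortho_compl_orth_left[OF proj_W0_residual])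
  then have "?r = 0" by simp
  then show ?thesis using proj_W0_mem[of ?h] by simp
qed

lemma confined_inverse_perturbation:
  assumes T: "bounded_clinear T" and on_compl: "\<And>v. v \<in> ortho_compl W0 \<Longrightarrow> T v = U v"
    and on_W0: "\<And>w. w \<in> W0 \<Longrightarrow> inv U (T w) \<in> W0"
    and T': "bounded_clinear T'" "\<And>y. T (T' y) = y" "\<And>y. T' (T y) = y"
  shows "confined (\<lambda>x. T' (U x) - x)"
proof (rule confined_intro)
  show "bounded_clinear (\<lambda>x. T' (U x) - x)"
    by (rule bounded_clinear_diff[OF bounded_clinear_compose[OF T'(1) bounded_clinear_U] bounded_clinear_ident])
  show "T' (U v) - v = 0" if "v \<in> ortho_compl W0" for v
    using on_compl[OF that] T'(3) by (metis diff_self)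
  show "T' (U w) - w \<in> W0" if "w \<in> W0" for w
    using inverse_perturbation_maps_W0[OF T on_compl on_W0 T'(2) that] that
    by (rule csubspaceD(4)[OF csubspace_W0])
qed

lemma similar_to_shift:
  assumes T: "bounded_clinear T" "bij T" "bounded_clinear (inv T)"
    and on_compl: "\<And>v. v \<in> ortho_compl W0 \<Longrightarrow> T v = U v"
    and on_W0: "\<And>w. w \<in> W0 \<Longrightarrow> inv U (T w) \<in> W0"
  obtains Z where "bounded_clinear Z" "bij Z" "bounded_clinear (inv Z)" "\<And>x. Z (T x) = U (Z x)"
proof -
  define D where "D x = inv U (T x) - x" for x
  define D' where "D' x = inv T (U x) - x" for x
  have T_inv_T: "T (inv T y) = y" and inv_T_T: "inv T (T y) = y" for y
    using T(2) by (simp_all add: bij_is_surj surj_f_inv_f bij_is_inj)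
  have D: "confined D" unfolding D_def by (rule confined_perturbation[OF T(1) on_compl on_W0])
  have D': "confined D'"
    unfolding D'_def by (rule confined_inverse_perturbation[OF T(1) on_compl on_W0 T(3) T_inv_T inv_T_T])
  have D_add: "D (a + b) = D a + D b" and D'_add: "D' (a + b) = D' a + D' b" for a b
    using D D' clinear_add unfolding confined_def by blast+
  \<comment> \<open>\<open>I + D = U\<^sup>-\<^sup>1 T\<close> and \<open>I + D' = T\<^sup>-\<^sup>1 U\<close> are mutually inverse\<close>
  have "D x + D' x + D (D' x) = 0" for x
  proof -
    have "x + D' x + D (x + D' x) = x" unfolding D_def D'_def by (simp add: T_inv_T)
    then show ?thesis by (simp add: D_add algebra_simps)
  qed
  then have ZZ': "intertwiner D (intertwiner D' x) = x" for x by (rule intertwiner_inverse[OF D D'])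
  have "D' x + D x + D' (D x) = 0" for x
  proof -
    have "x + D x + D' (x + D x) = x" unfolding D_def D'_def by (simp add: inv_T_T)
    then show ?thesis by (simp add: D'_add algebra_simps)
  qed
  then have Z'Z: "intertwiner D' (intertwiner D x) = x" for x by (rule intertwiner_inverse[OF D' D])
  have "intertwiner D (T x) = U (intertwiner D x)" for x
    using intertwiner_intertwines[OF D, of x] by (simp add: D_def)
  moreover note inv_bij_eq[OF Z'Z ZZ']
  ultimately show ?thesis
    using that bounded_clinear_intertwiner[OF D] bounded_clinear_intertwiner[OF D'] by metis
qed

lemma phillips_op_subset_cayley_graph_imp_eq:
  assumes "phillips_op U W0 \<subseteq> cayley_graph T" and "v \<in> ortho_compl W0"
  shows "T v = U v"
proof -
  have "(U v - v, scaleC \<i> (U v + v)) \<in> cayley_graph T"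
    using assms unfolding phillips_op_def by blast
  then obtain v' where "T v' - v' = U v - v" "scaleC \<i> (T v' + v') = scaleC \<i> (U v + v)"
    unfolding cayley_graph_def by auto
  from cayley_pair_eq[OF this] show ?thesis by simp
qed

lemma cayley_graph_subset_op_adj_phillips_op_imp_W0:
  assumes "cayley_graph T \<subseteq> op_adj (phillips_op U W0)" and "w \<in> W0"
  shows "inv U (T w) \<in> W0"
proof (rule mem_if_orthogonal_to_ortho_compl[OF closed_W0 csubspace_W0])
  fix v assume "v \<in> ortho_compl W0"
  then have "(U v - v, scaleC \<i> (U v + v)) \<in> phillips_op U W0" unfolding phillips_op_def by blast
  moreover have "(T w - w, scaleC \<i> (T w + w)) \<in> op_adj (phillips_op U W0)"
    using assms(1) unfolding cayley_graph_def by blast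
  ultimately have "cinner (scaleC \<i> (U v + v)) (T w - w) = cinner (U v - v) (scaleC \<i> (T w + w))"
    unfolding op_adj_def by fast
  then have "cinner (U v) (T w) = cinner v w" by (simp only: cayley_adjoint_iff)
  also have "\<dots> = 0" by (rule ortho_compl_orth_left[OF \<open>v \<in> ortho_compl W0\<close> \<open>w \<in> W0\<close>])
  finally show "cinner (inv U (T w)) v = 0"
    by (simp add: cinner_inv_U_left cinner_commute[of "T w"])
qed

lemma similar_to_self_adjoint_if_real_spectrum:
  assumes "is_op B" and "phillips_op U W0 \<subseteq> B" and "B \<subseteq> op_adj (phillips_op U W0)"
    and "op_spectrum B \<subseteq> \<real>"
  shows "similar_to_self_adjoint B"
proof -
  have "\<i> \<in> op_resolvent_set B" "- \<i> \<in> op_resolvent_set B"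
    using \<open>op_spectrum B \<subseteq> \<real>\<close> unfolding op_spectrum_def by (auto simp: complex_is_Real_iff)
  then obtain T where T: "bounded_clinear T" "bij T" "bounded_clinear (inv T)"
    and B: "B = cayley_graph T"
    using cayley_transform_exists[OF \<open>is_op B\<close>] by blast
  obtain Z where "bounded_clinear Z" "bij Z" "bounded_clinear (inv Z)" "\<And>x. Z (T x) = U (Z x)"
    using similar_to_shift[OF T] assms(2,3) unfolding B
    by (metis phillips_op_subset_cayley_graph_imp_eq cayley_graph_subset_op_adj_phillips_op_imp_W0)
  moreover from this have "B = {(x, y). (Z x, Z y) \<in> cayley_graph U}"
    unfolding B by (intro cayley_graph_similar)
  ultimately show ?thesis
    unfolding similar_to_self_adjoint_def using self_adjoint_cayley_graph by blast
qed

end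

theorem corollary3p10:
  fixes U :: "'a::chilbert \<Rightarrow> 'a" and W0 :: "'a set"
    and J :: "'a \<Rightarrow> 'a" and B :: "'a lop"
  assumes "bilateral_shift U W0"
    and "has_cdim W0 2"
    and "fundamental_symmetry J"
    and "commutes_with J (phillips_op U W0)"
    and "phillips_op U W0 \<subseteq> B"
    and "J_self_adjoint J B"
  shows "similar_to_self_adjoint B \<longleftrightarrow> op_spectrum B \<subseteq> \<real>"
proof
  assume "op_spectrum B \<subseteq> \<real>"
  have "is_op B" using \<open>J_self_adjoint J B\<close> unfolding J_self_adjoint_def dense_op_def by blast
  moreover have "B \<subseteq> op_adj (phillips_op U W0)"
    by (rule J_self_adjoint_extension_subset_op_adj[OF assms(3-6)])
  ultimately show "similar_to_self_adjoint B"
    by (rule wandering_shift.similar_to_self_adjoint_if_real_spectrum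
        [OF bilateral_shift_wandering_shift[OF \<open>bilateral_shift U W0\<close>] _ \<open>phillips_op U W0 \<subseteq> B\<close>
          _ \<open>op_spectrum B \<subseteq> \<real>\<close>])
qed (rule similar_to_self_adjoint_real_spectrum)

end
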